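(* Let $G_4$ be the Lie group of real $4\times4$ matrices $$X=\begin{pmatrix}1&x_2&x_3&x_4\\0&1&x_1&\frac{x_1^2}{2}\\0&0&1&x_1\\0&0&0&1\end{pmatrix},\qquad (x_1,x_2,x_3,x_4)\in\mathbb{R}^4,$$ with Lie algebra basis $A_1=E_{23}+E_{34}$, $A_2=E_{12}$, $A_3=[A_2,A_1]$, $A_4=[A_3,A_1]$ (where $E_{ij}$ is the matrix unit and $[A,B]=AB-BA$). Consider the drift-free left-invariant control system $$\dot X=X(A_1u_1+A_2u_2),\qquad X\in G_4,$$ with smooth controls $u_1,u_2$, and the cost $$J(u_1,u_2)=\frac12\int_0^{t_f}\big(c_1u_1^2(t)+c_2u_2^2(t)\big)\,dt,\qquad c_1>0,\ c_2>0.$$ Then the controls which minimize $J$ and steer the system from $X(0)=X_0$ at $t=0$ to $X(t_f)=X_f$ at $t=t_f$ are given by $u_1=z_1/c_1$, $u_2=z_2/c_2$, where $z_1,z_2,z_3,z_4$ are solutions of $$\dot z_1=\frac1{c_2}z_2z_3,\qquad \dot z_2=-\frac1{c_1}z_1z_3,\qquad \dot z_3=-\frac1{c_1}z_1z_4,\qquad \dot z_4=0.$$ *)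

theory Defs
  imports "HOL-Analysis.Analysis" "HOL-Library.Numeral_Type"
begin

text \<open>Indices of 4x4 matrices: the elements of type 4 are numbered 0,1,2,3.\<close>
definition idx4 :: "4 \<Rightarrow> nat" where
  "idx4 i = nat (Rep_bit0 i)"

text \<open>4x4 real matrix from a list of rows (row/column 1-based in the paper = list position + 1).\<close>
definition mat4 :: "real list list \<Rightarrow> real^4^4" where
  "mat4 M = (\<chi> i j. M ! idx4 i ! idx4 j)"

text \<open>Matrix unit E_ij (1-based indices i j in 1..4).\<close>
definition Eu :: "nat \<Rightarrow> nat \<Rightarrow> real^4^4" where
  "Eu i j = (\<chi> a b. if idx4 a + 1 = i \<and> idx4 b + 1 = j then 1 else 0)"

definition lie_br :: "real^4^4 \<Rightarrow> real^4^4 \<Rightarrow> real^4^4" where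
  "lie_br A B = A ** B - B ** A"

definition G4 :: "(real^4^4) set" where
  "G4 = {mat4 [[1, x2, x3, x4], [0, 1, x1, x1^2 / 2], [0, 0, 1, x1], [0, 0, 0, 1]]
          | x1 x2 x3 x4. True}"

definition A1 :: "real^4^4" where "A1 = Eu 2 3 + Eu 3 4"
definition A2 :: "real^4^4" where "A2 = Eu 1 2"
definition A3 :: "real^4^4" where "A3 = lie_br A2 A1"
definition A4 :: "real^4^4" where "A4 = lie_br A3 A1"

definition smooth_control :: "real \<Rightarrow> (real \<Rightarrow> real) \<Rightarrow> bool" where
  "smooth_control tf u \<longleftrightarrow> (\<exists>U. open U \<and> {0..tf} \<subseteq> U \<and>
      (\<forall>k. \<forall>x\<in>U. ((deriv ^^ k) u) differentiable (at x)))"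

definition trajectory ::
  "real \<Rightarrow> (real \<Rightarrow> real) \<Rightarrow> (real \<Rightarrow> real) \<Rightarrow> (real \<Rightarrow> real^4^4) \<Rightarrow> bool" where
  "trajectory tf u1 u2 X \<longleftrightarrow> (\<forall>t\<in>{0..tf}. X t \<in> G4 \<and>
      (X has_vector_derivative (X t ** (u1 t *\<^sub>R A1 + u2 t *\<^sub>R A2))) (at t within {0..tf}))"

definition steers ::
  "real \<Rightarrow> real^4^4 \<Rightarrow> real^4^4 \<Rightarrow> (real \<Rightarrow> real) \<Rightarrow> (real \<Rightarrow> real) \<Rightarrow> bool" where
  "steers tf X0 Xf u1 u2 \<longleftrightarrow> smooth_control tf u1 \<and> smooth_control tf u2 \<and>
      (\<exists>X. trajectory tf u1 u2 X \<and> X 0 = X0 \<and> X tf = Xf)"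

definition cost :: "real \<Rightarrow> real \<Rightarrow> real \<Rightarrow> (real \<Rightarrow> real) \<Rightarrow> (real \<Rightarrow> real) \<Rightarrow> real" where
  "cost c1 c2 tf u1 u2 = 1/2 * integral {0..tf} (\<lambda>t. c1 * (u1 t)^2 + c2 * (u2 t)^2)"

end

theory Submission
  imports Defs
begin

text \<open>In the coordinates \<open>X = G4_mat x1 x2 x3 x4\<close> the system reads \<open>x1' = u1\<close>, \<open>x2' = u2\<close>,
  \<open>x3' = u1 x2\<close>, \<open>x4' = u1 x3\<close>, so the endpoint of a trajectory is an explicit iterated integral of the
  controls, whose first variation in a direction \<open>(b1, b2)\<close> is linear in \<open>(b1, b2)\<close> with a quadratic
  remainder. An optimal control also minimises the cost among the perturbed controls \<open>u + b\<close>,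
  \<open>b\<close> polynomial, with the same endpoint.

  If the first variations of polynomial perturbations fill \<open>\<real>\<^sup>4\<close> (normal case), a multiplier rule
  proved with Brouwer's fixed point theorem yields \<open>lam\<close> such that the first variation of the cost is
  \<open>lam\<close> applied to the first variation of the endpoint. Integrating by parts against the costates of
  the Pontryagin Hamiltonian, and using that polynomials are dense (Stone-Weierstrass), this says
  \<open>c1 u1 = \<partial>H/\<partial>u1\<close> and \<open>c2 u2 = p2\<close>; the costate equations then are the stated system for
  \<open>z = (\<partial>H/\<partial>u1, p2, p3, p4)\<close>. Otherwise some \<open>lam \<noteq> 0\<close> annihilates all first variations
  (abnormal case); this forces \<open>u1 = 0\<close>, optimality then forces \<open>u2\<close> to be constant, and
  constant \<open>z\<close> solve the system.\<close>

section \<open>Coordinates on \<open>G4\<close>\<close>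

lemma idx4_numeral [simp]: "idx4 0 = 0" "idx4 1 = 1" "idx4 2 = 2" "idx4 3 = 3"
  by (simp_all add: idx4_def bit0.Rep_0 bit0.Rep_1 bit0.Rep_numeral)

lemma numeral_4_eq_0: "(4::4) = 0"
  by simp

lemma all_4_iff: "(\<forall>i::4. P i) \<longleftrightarrow> P 0 \<and> P 1 \<and> P 2 \<and> P 3"
  using forall_4[of P] by (auto simp: numeral_4_eq_0)

lemma sum_UNIV_4: "sum f (UNIV::4 set) = f 0 + f 1 + f 2 + f 3"
  using sum_4[of f] by (simp add: numeral_4_eq_0 ac_simps)

definition vec4 :: "real \<Rightarrow> real \<Rightarrow> real \<Rightarrow> real \<Rightarrow> real^4" where
  "vec4 a b c d = (\<chi> i. [a, b, c, d] ! idx4 i)"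

lemma vec4_nth [simp]:
  "vec4 a b c d $ 0 = a" "vec4 a b c d $ 1 = b" "vec4 a b c d $ 2 = c" "vec4 a b c d $ 3 = d"
  by (simp_all add: vec4_def)

lemma vec4_add: "vec4 a b c d + vec4 a' b' c' d' = vec4 (a + a') (b + b') (c + c') (d + d')"
  unfolding vec_eq_iff all_4_iff by simp

lemma vec4_diff: "vec4 a b c d - vec4 a' b' c' d' = vec4 (a - a') (b - b') (c - c') (d - d')"
  unfolding vec_eq_iff all_4_iff by simp

lemma vec4_scaleR: "r *\<^sub>R vec4 a b c d = vec4 (r * a) (r * b) (r * c) (r * d)"
  unfolding vec_eq_iff all_4_iff by simp

lemma norm_vec4_le: "norm (vec4 a b c d) \<le> \<bar>a\<bar> + \<bar>b\<bar> + \<bar>c\<bar> + \<bar>d\<bar>"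
  using norm_le_l1_cart[of "vec4 a b c d"] by (simp add: sum_UNIV_4)

lemma inner_vec4: "x \<bullet> vec4 a b c d = x$0 * a + x$1 * b + x$2 * c + x$3 * d"
  by (simp add: inner_vec_def sum_UNIV_4)

definition G4_mat :: "real \<Rightarrow> real \<Rightarrow> real \<Rightarrow> real \<Rightarrow> real^4^4" where
  "G4_mat x1 x2 x3 x4 = mat4 [[1, x2, x3, x4], [0, 1, x1, x1^2 / 2], [0, 0, 1, x1], [0, 0, 0, 1]]"

lemma G4_eq: "G4 = {G4_mat x1 x2 x3 x4 | x1 x2 x3 x4. True}"
  by (auto simp: G4_def G4_mat_def)

lemma mat4_nth: "mat4 M $ i $ j = M ! idx4 i ! idx4 j"
  by (simp add: mat4_def)

lemma G4_mat_coordinates [simp]: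
  "G4_mat x1 x2 x3 x4 $ 1 $ 2 = x1" "G4_mat x1 x2 x3 x4 $ 0 $ 1 = x2"
  "G4_mat x1 x2 x3 x4 $ 0 $ 2 = x3" "G4_mat x1 x2 x3 x4 $ 0 $ 3 = x4"
  by (simp_all add: G4_mat_def mat4_nth)

lemma G4_mat_mult_control:
  "G4_mat x1 x2 x3 x4 ** (v1 *\<^sub>R A1 + v2 *\<^sub>R A2) =
     mat4 [[0, v2, v1 * x2, v1 * x3], [0, 0, v1, v1 * x1], [0, 0, 0, v1], [0, 0, 0, 0]]"
  unfolding vec_eq_iff all_4_iff
  by (simp add: matrix_matrix_mult_def sum_UNIV_4 G4_mat_def mat4_nth A1_def A2_def Eu_def)

lemma G4_mat_decompose:
  "G4_mat x1 x2 x3 x4 = G4_mat 0 0 0 0 + x1 *\<^sub>R (Eu 2 3 + Eu 3 4) + x2 *\<^sub>R Eu 1 2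
     + x3 *\<^sub>R Eu 1 3 + x4 *\<^sub>R Eu 1 4 + (x1^2 / 2) *\<^sub>R Eu 2 4"
  unfolding vec_eq_iff all_4_iff by (simp add: G4_mat_def mat4_nth Eu_def)

lemma trajectory_of_coordinates:
  assumes d1: "\<And>t. t \<in> {0..T} \<Longrightarrow> (y1 has_real_derivative v1 t) (at t within {0..T})"
    and d2: "\<And>t. t \<in> {0..T} \<Longrightarrow> (y2 has_real_derivative v2 t) (at t within {0..T})"
    and d3: "\<And>t. t \<in> {0..T} \<Longrightarrow> (y3 has_real_derivative v1 t * y2 t) (at t within {0..T})"
    and d4: "\<And>t. t \<in> {0..T} \<Longrightarrow> (y4 has_real_derivative v1 t * y3 t) (at t within {0..T})"
  shows "trajectory T v1 v2 (\<lambda>t. G4_mat (y1 t) (y2 t) (y3 t) (y4 t))"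
  unfolding trajectory_def
proof (intro ballI conjI)
  fix t assume t: "t \<in> {0..T}"
  show "G4_mat (y1 t) (y2 t) (y3 t) (y4 t) \<in> G4"
    by (auto simp: G4_eq)
  have "((\<lambda>t. G4_mat 0 0 0 0 + y1 t *\<^sub>R (Eu 2 3 + Eu 3 4) + y2 t *\<^sub>R Eu 1 2 + y3 t *\<^sub>R Eu 1 3
      + y4 t *\<^sub>R Eu 1 4 + ((y1 t)^2 / 2) *\<^sub>R Eu 2 4) has_vector_derivative
      v1 t *\<^sub>R (Eu 2 3 + Eu 3 4) + v2 t *\<^sub>R Eu 1 2 + (v1 t * y2 t) *\<^sub>R Eu 1 3
      + (v1 t * y3 t) *\<^sub>R Eu 1 4 + (y1 t * v1 t) *\<^sub>R Eu 2 4) (at t within {0..T})"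
    by (rule derivative_eq_intros d1[OF t] d2[OF t] d3[OF t] d4[OF t] refl | simp)+
  moreover have "v1 t *\<^sub>R (Eu 2 3 + Eu 3 4) + v2 t *\<^sub>R Eu 1 2 + (v1 t * y2 t) *\<^sub>R Eu 1 3
      + (v1 t * y3 t) *\<^sub>R Eu 1 4 + (y1 t * v1 t) *\<^sub>R Eu 2 4
      = G4_mat (y1 t) (y2 t) (y3 t) (y4 t) ** (v1 t *\<^sub>R A1 + v2 t *\<^sub>R A2)"
    unfolding G4_mat_mult_control vec_eq_iff all_4_iff by (simp add: mat4_nth Eu_def)
  ultimately show "((\<lambda>t. G4_mat (y1 t) (y2 t) (y3 t) (y4 t)) has_vector_derivative
      G4_mat (y1 t) (y2 t) (y3 t) (y4 t) ** (v1 t *\<^sub>R A1 + v2 t *\<^sub>R A2)) (at t within {0..T})"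
    by (subst G4_mat_decompose) simp
qed

lemma has_real_derivative_matrix_entry:
  fixes X :: "real \<Rightarrow> real^'n^'m"
  assumes "(X has_vector_derivative D) F"
  shows "((\<lambda>t. X t $ i $ j) has_real_derivative D $ i $ j) F"
proof -
  have "bounded_linear (\<lambda>x::real^'n^'m. x $ i $ j)"
    using bounded_linear_compose[OF bounded_linear_vec_nth[of j] bounded_linear_vec_nth[of i]]
    by (simp add: o_def)
  from bounded_linear.has_vector_derivative[OF this assms] show ?thesis
    by (simp add: has_real_derivative_iff_has_vector_derivative)
qed

lemma trajectory_coordinates:
  assumes "trajectory T v1 v2 X" and "t \<in> {0..T}"
  shows "X t = G4_mat (X t $ 1 $ 2) (X t $ 0 $ 1) (X t $ 0 $ 2) (X t $ 0 $ 3)"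
    and "((\<lambda>t. X t $ 1 $ 2) has_real_derivative v1 t) (at t within {0..T})"
    and "((\<lambda>t. X t $ 0 $ 1) has_real_derivative v2 t) (at t within {0..T})"
    and "((\<lambda>t. X t $ 0 $ 2) has_real_derivative v1 t * X t $ 0 $ 1) (at t within {0..T})"
    and "((\<lambda>t. X t $ 0 $ 3) has_real_derivative v1 t * X t $ 0 $ 2) (at t within {0..T})"
proof -
  from assms have "X t \<in> G4"
    and D: "(X has_vector_derivative X t ** (v1 t *\<^sub>R A1 + v2 t *\<^sub>R A2)) (at t within {0..T})"
    by (auto simp: trajectory_def)
  then obtain x1 x2 x3 x4 where X: "X t = G4_mat x1 x2 x3 x4"
    by (auto simp: G4_eq)
  show "X t = G4_mat (X t $ 1 $ 2) (X t $ 0 $ 1) (X t $ 0 $ 2) (X t $ 0 $ 3)"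
    by (simp add: X)
  note entry = has_real_derivative_matrix_entry[OF D]
  show "((\<lambda>t. X t $ 1 $ 2) has_real_derivative v1 t) (at t within {0..T})"
    using entry[of 1 2] by (simp add: X G4_mat_mult_control mat4_nth)
  show "((\<lambda>t. X t $ 0 $ 1) has_real_derivative v2 t) (at t within {0..T})"
    using entry[of 0 1] by (simp add: X G4_mat_mult_control mat4_nth)
  show "((\<lambda>t. X t $ 0 $ 2) has_real_derivative v1 t * X t $ 0 $ 1) (at t within {0..T})"
    using entry[of 0 2] by (simp add: X G4_mat_mult_control mat4_nth)
  show "((\<lambda>t. X t $ 0 $ 3) has_real_derivative v1 t * X t $ 0 $ 2) (at t within {0..T})"
    using entry[of 0 3] by (simp add: X G4_mat_mult_control mat4_nth)
qed

section \<open>Smooth and polynomial controls\<close>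

lemma smooth_control_imp_continuous_on:
  assumes "smooth_control T u"
  shows "continuous_on {0..T} u"
proof -
  from assms obtain U where "{0..T} \<subseteq> U" and "\<And>x. x \<in> U \<Longrightarrow> u differentiable (at x)"
    unfolding smooth_control_def by (metis funpow_0)
  then show ?thesis
    by (meson continuous_at_imp_continuous_on differentiable_imp_continuous_within subsetD)
qed

lemma smooth_control_const: "smooth_control T (\<lambda>t. c)"
proof -
  have "(deriv ^^ k) (\<lambda>t. c) = (\<lambda>t. if k = 0 then c else 0)" for k
    by (induction k) auto
  then show ?thesis
    unfolding smooth_control_def by (intro exI[of _ UNIV]) auto
qed

lemma real_polynomial_function_higher_deriv:
  assumes "real_polynomial_function p"
  shows "real_polynomial_function ((deriv ^^ k) p)"
proof (induction k)
  case (Suc k)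
  then obtain p' where "real_polynomial_function p'"
    and "\<And>x. ((deriv ^^ k) p has_real_derivative p' x) (at x)"
    using has_real_derivative_polynomial_function by blast
  then show ?case
    by (metis DERIV_imp_deriv ext funpow.simps(2) o_apply)
qed (use assms in simp)

lemma continuous_on_real_polynomial_function:
  "real_polynomial_function p \<Longrightarrow> continuous_on S p"
  by (rule continuous_on_polymonial_function) (simp add: real_polynomial_function_eq[symmetric])

lemma real_polynomial_function_lincomb:
  "real_polynomial_function f \<Longrightarrow> real_polynomial_function g \<Longrightarrow>
    real_polynomial_function (\<lambda>s. c * f s + d * g s)"
  by (intro real_polynomial_function.intros(3) real_polynomial_function.intros(4)[OF real_polynomial_function.intros(2)])

lemma higher_deriv_add_on_open:
  fixes f g :: "real \<Rightarrow> real"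
  assumes "open U" and "x \<in> U"
    and f: "\<And>k x. x \<in> U \<Longrightarrow> ((deriv ^^ k) f) differentiable (at x)"
    and g: "\<And>k x. x \<in> U \<Longrightarrow> ((deriv ^^ k) g) differentiable (at x)"
  shows "(deriv ^^ k) (\<lambda>t. f t + g t) x = (deriv ^^ k) f x + (deriv ^^ k) g x"
  using \<open>x \<in> U\<close>
proof (induction k arbitrary: x)
  case (Suc k)
  have "\<forall>\<^sub>F y in nhds x. (deriv ^^ k) (\<lambda>t. f t + g t) y = (deriv ^^ k) f y + (deriv ^^ k) g y"
    using Suc \<open>open U\<close> eventually_nhds by blast
  then have "(deriv ^^ Suc k) (\<lambda>t. f t + g t) x = deriv (\<lambda>y. (deriv ^^ k) f y + (deriv ^^ k) g y) x"
    using deriv_cong_ev by force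
  also have "\<dots> = deriv ((deriv ^^ k) f) x + deriv ((deriv ^^ k) g) x"
    using f[OF Suc.prems, of k] g[OF Suc.prems, of k]
    by (intro deriv_add) (auto simp: field_differentiable_def real_differentiable_def)
  finally show ?case
    by simp
qed simp

lemma smooth_control_add_polynomial:
  assumes "smooth_control T u" and p: "real_polynomial_function p"
  shows "smooth_control T (\<lambda>t. u t + p t)"
proof -
  obtain U where U: "open U" "{0..T} \<subseteq> U"
    and du: "\<And>k x. x \<in> U \<Longrightarrow> ((deriv ^^ k) u) differentiable (at x)"
    using assms(1) unfolding smooth_control_def by blast
  have dp: "((deriv ^^ k) p) differentiable (at x)" for k x
    using real_polynomial_function_higher_deriv[OF p] differentiable_at_real_polynomial_function
    by blast
  have "((deriv ^^ k) (\<lambda>t. u t + p t)) differentiable (at x)" if x: "x \<in> U" for k x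
  proof -
    obtain D1 D2 where "((deriv ^^ k) u has_real_derivative D1) (at x)"
      and "((deriv ^^ k) p has_real_derivative D2) (at x)"
      using du[OF x, of k] dp[of k x] real_differentiable_def by blast
    then have "((\<lambda>y. (deriv ^^ k) u y + (deriv ^^ k) p y) has_real_derivative D1 + D2) (at x)"
      by (rule DERIV_add)
    then have "((deriv ^^ k) (\<lambda>t. u t + p t) has_real_derivative D1 + D2) (at x)"
      by (rule has_field_derivative_transform_within_open[OF _ U(1) x])
        (use higher_deriv_add_on_open[OF U(1) _ du dp] in auto)
    then show ?thesis
      using real_differentiable_def by blast
  qed
  with U show ?thesis
    unfolding smooth_control_def by blast
qed

section \<open>Primitives\<close>

definition prim :: "(real \<Rightarrow> real) \<Rightarrow> real \<Rightarrow> real" where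
  "prim f t = integral {0..t} f"

lemma prim_0 [simp]: "prim f 0 = 0"
  by (simp add: prim_def)

lemma has_real_derivative_prim [derivative_intros]:
  assumes "continuous_on {0..T} f" and "t \<in> {0..T}"
  shows "(prim f has_real_derivative f t) (at t within {0..T})"
  unfolding prim_def by (rule integral_has_real_derivative[OF assms])

lemma continuous_on_prim [continuous_intros]:
  assumes "continuous_on {0..T} f"
  shows "continuous_on {0..T} (prim f)"
  unfolding prim_def
  by (rule indefinite_integral_continuous_1[OF integrable_continuous_real[OF assms]])

lemma abs_prim_le:
  assumes "continuous_on {0..T} f" and "\<And>x. x \<in> {0..T} \<Longrightarrow> \<bar>f x\<bar> \<le> B" and "t \<in> {0..T}"
  shows "\<bar>prim f t\<bar> \<le> T * B"
proof -
  have "0 \<le> B"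
    using assms(2)[of 0] assms(3) by auto
  have "norm (integral {0..t} f) \<le> B * (t - 0)"
    using assms by (intro integral_bound) (auto intro: continuous_on_subset)
  also have "\<dots> \<le> T * B"
    using assms(3) \<open>0 \<le> B\<close> by (auto intro: mult_left_mono simp: mult.commute)
  finally show ?thesis
    by (simp add: prim_def)
qed

lemma eq_prim_if_has_derivative:
  assumes "continuous_on {0..T} g"
    and "\<And>t. t \<in> {0..T} \<Longrightarrow> (y has_real_derivative g t) (at t within {0..T})"
    and "t \<in> {0..T}"
  shows "y t = y 0 + prim g t"
proof -
  have "\<And>s. s \<in> {0..T} \<Longrightarrow> ((\<lambda>t. y t - prim g t) has_real_derivative 0) (at s within {0..T})"
    using assms(1,2) by (auto intro!: derivative_eq_intros)
  then have "\<exists>c. \<forall>s\<in>{0..T}. y s - prim g s = c"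
    by (intro has_field_derivative_zero_constant) auto
  then obtain c where c: "\<forall>s\<in>{0..T}. y s - prim g s = c" ..
  have "0 \<in> {0..T}"
    using assms(3) by auto
  then have "y t - prim g t = c" and "y 0 - prim g 0 = c"
    using c assms(3) by blast+
  then show ?thesis
    by simp
qed

lemma prim_lincomb:
  assumes "continuous_on {0..T} f" and "continuous_on {0..T} g" and "t \<in> {0..T}"
  shows "prim (\<lambda>s. c * f s + d * g s) t = c * prim f t + d * prim g t"
proof -
  have "(\<lambda>t. c * prim f t + d * prim g t) t
      = (\<lambda>t. c * prim f t + d * prim g t) 0 + prim (\<lambda>s. c * f s + d * g s) t"
    by (rule eq_prim_if_has_derivative[OF _ _ assms(3)])
      (use assms(1,2) in \<open>auto intro!: continuous_intros derivative_eq_intros\<close>)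
  then show ?thesis
    by simp
qed

lemma prim_add:
  assumes "continuous_on {0..T} f" and "continuous_on {0..T} g" and "t \<in> {0..T}"
  shows "prim (\<lambda>s. f s + g s) t = prim f t + prim g t"
  using prim_lincomb[OF assms, of 1 1] by simp

lemma prim_cmult: "prim (\<lambda>s. c * f s) t = c * prim f t"
  by (simp add: prim_def)

lemma prim_cong: "(\<And>s. s \<in> {0..t} \<Longrightarrow> f s = g s) \<Longrightarrow> prim f t = prim g t"
  unfolding prim_def by (rule integral_cong) auto

lemma zero_if_prim_square_nonpos:
  assumes "0 < T" and h: "continuous_on {0..T} h" and "prim (\<lambda>t. h t * h t) T \<le> 0"
    and "t \<in> {0..T}"
  shows "h t = 0"
proof -
  have ch: "continuous_on {0..T} (\<lambda>t. h t * h t)"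
    using h by (intro continuous_intros)
  have "prim (\<lambda>t. h t * h t) T \<ge> 0"
    unfolding prim_def by (rule integral_nonneg) (auto intro: integrable_continuous_real[OF ch])
  with assms(3) have "((\<lambda>t. h t * h t) has_integral 0) (cbox 0 T)"
    using integrable_continuous_real[OF ch] unfolding prim_def by (simp add: has_integral_integral)
  then have "h t * h t = 0"
    by (rule has_integral_0_cbox_imp_0[rotated 2]) (use ch assms in auto)
  then show ?thesis
    by simp
qed

lemma continuous_on_Icc_abs_bounded:
  assumes "continuous_on {a..b} (f :: real \<Rightarrow> real)"
  obtains M where "M \<ge> 1" and "\<And>t. t \<in> {a..b} \<Longrightarrow> \<bar>f t\<bar> \<le> M"
proof -
  have "compact (f ` {a..b})"
    using assms by (intro compact_continuous_image) auto
  then obtain B where "\<forall>x\<in>f ` {a..b}. norm x \<le> B"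
    using compact_imp_bounded bounded_iff by metis
  then show ?thesis
    using that[of "max 1 B"] by force
qed

section \<open>A first-order condition for constrained minima\<close>

lemma linear_term_zero_if_nonneg:
  fixes c A s0 :: real
  assumes "s0 > 0" and "A \<ge> 0" and nonneg: "\<And>s. \<bar>s\<bar> \<le> s0 \<Longrightarrow> 0 \<le> s * c + A * s\<^sup>2"
  shows "c = 0"
proof (rule ccontr)
  assume "c \<noteq> 0"
  define \<sigma> where "\<sigma> = min s0 (\<bar>c\<bar> / (A + 1))"
  have "\<sigma> > 0"
    using assms(1,2) \<open>c \<noteq> 0\<close> by (simp add: \<sigma>_def)
  have "0 \<le> (- sgn c * \<sigma>) * c + A * (- sgn c * \<sigma>)\<^sup>2"
    using \<open>\<sigma> > 0\<close> by (intro nonneg) (simp add: \<sigma>_def abs_mult)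
  also have "\<dots> = \<sigma> * (A * \<sigma> - \<bar>c\<bar>)"
    using \<open>c \<noteq> 0\<close> by (simp add: power2_eq_square algebra_simps abs_sgn sgn_mult_self_eq)
  finally have "\<bar>c\<bar> \<le> A * \<sigma>"
    using \<open>\<sigma> > 0\<close> by (simp add: zero_le_mult_iff)
  moreover have "\<sigma> * (A + 1) \<le> \<bar>c\<bar>"
    using assms(2) by (simp add: \<sigma>_def le_divide_eq min_def)
  ultimately show False
    using \<open>\<sigma> > 0\<close> by (simp add: algebra_simps)
qed

lemma brouwer_zero_near_identity:
  fixes F :: "'a::euclidean_space \<Rightarrow> 'a"
  assumes "continuous_on (cball 0 r) F" and "r \<ge> 0"
    and "\<And>e. norm e \<le> r \<Longrightarrow> norm (F e - e) \<le> r"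
  obtains e where "norm e \<le> r" and "F e = 0"
proof -
  obtain e where "e \<in> cball 0 r" and "e - F e = e"
  proof (rule brouwer[of "cball 0 r" "\<lambda>e. e - F e"])
    show "continuous_on (cball 0 r) (\<lambda>e. e - F e)"
      using assms(1) by (intro continuous_intros)
    show "(\<lambda>e. e - F e) \<in> cball 0 r \<rightarrow> cball 0 r"
      using assms(3) by (auto simp: norm_minus_commute)
  qed (use assms(2) in auto)
  then show ?thesis
    using that by simp
qed

text \<open>By Brouwer the constraint \<open>Phi s e = Phi 0 0\<close> is solved by some \<open>e = O(s\<^sup>2)\<close>, along which
  the cost is \<open>Cst 0 0 + s * c + O(s\<^sup>2)\<close>.\<close>

lemma constrained_min_first_order:
  fixes Phi :: "real \<Rightarrow> 'a::euclidean_space \<Rightarrow> 'a" and Cst :: "real \<Rightarrow> 'a \<Rightarrow> real"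
  assumes cont: "\<And>s. continuous_on UNIV (Phi s)" and K: "K \<ge> 0" and "\<delta> > 0"
    and Phi_exp: "\<And>s e. \<bar>s\<bar> \<le> \<delta> \<Longrightarrow> norm e \<le> \<delta> \<Longrightarrow>
      norm (Phi s e - Phi 0 0 - e) \<le> K * (\<bar>s\<bar> + norm e)\<^sup>2"
    and Cst_exp: "\<And>s e. \<bar>s\<bar> \<le> \<delta> \<Longrightarrow> norm e \<le> \<delta> \<Longrightarrow>
      \<bar>Cst s e - Cst 0 0 - s * c - d \<bullet> e\<bar> \<le> K * (\<bar>s\<bar> + norm e)\<^sup>2"
    and min: "\<And>s e. Phi s e = Phi 0 0 \<Longrightarrow> Cst 0 0 \<le> Cst s e"
  shows "c = 0"
proof (rule linear_term_zero_if_nonneg)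
  show "min \<delta> (1 / (4 * K + 1)) > 0" and "4 * K * (norm d + 1) \<ge> 0"
    using \<open>\<delta> > 0\<close> K by auto
  fix s assume s: "\<bar>s\<bar> \<le> min \<delta> (1 / (4 * K + 1))"
  define r where "r = 4 * K * s\<^sup>2"
  have "4 * K * \<bar>s\<bar> \<le> 1"
    using s K by (simp add: field_simps) linarith
  then have "r \<le> \<bar>s\<bar>"
    using mult_right_mono[of "4 * K * \<bar>s\<bar>" 1 "\<bar>s\<bar>"] by (simp add: r_def power2_eq_square)
  have "\<bar>s\<bar> \<le> \<delta>"
    using s by simp
  have quad: "K * (\<bar>s\<bar> + norm e)\<^sup>2 \<le> r" if "norm e \<le> r" for e
  proof -
    have "K * (\<bar>s\<bar> + norm e)\<^sup>2 \<le> K * (2 * \<bar>s\<bar>)\<^sup>2"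
      using K that \<open>r \<le> \<bar>s\<bar>\<close> by (intro mult_left_mono power_mono) auto
    then show ?thesis
      by (simp add: r_def power2_eq_square)
  qed
  obtain e where e: "norm e \<le> r" and "Phi s e - Phi 0 0 = 0"
  proof (rule brouwer_zero_near_identity[of r "\<lambda>e. Phi s e - Phi 0 0"])
    show "continuous_on (cball 0 r) (\<lambda>e. Phi s e - Phi 0 0)"
      by (intro continuous_intros continuous_on_subset[OF cont]) auto
    show "norm (Phi s e - Phi 0 0 - e) \<le> r" if "norm e \<le> r" for e
      using Phi_exp[OF \<open>\<bar>s\<bar> \<le> \<delta>\<close>, of e] quad[OF that] that \<open>r \<le> \<bar>s\<bar>\<close> \<open>\<bar>s\<bar> \<le> \<delta>\<close> by simp
  qed (use K in \<open>simp add: r_def\<close>)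
  then have "0 \<le> Cst s e - Cst 0 0"
    using min by simp
  also have "\<dots> \<le> s * c + d \<bullet> e + K * (\<bar>s\<bar> + norm e)\<^sup>2"
    using Cst_exp[OF \<open>\<bar>s\<bar> \<le> \<delta>\<close>, of e] e \<open>r \<le> \<bar>s\<bar>\<close> \<open>\<bar>s\<bar> \<le> \<delta>\<close> by (simp add: abs_le_iff)
  also have "\<dots> \<le> s * c + norm d * r + r"
    using quad[OF e] norm_cauchy_schwarz[of d e] mult_left_mono[OF e norm_ge_zero[of d]] by simp
  also have "\<dots> = s * c + 4 * K * (norm d + 1) * s\<^sup>2"
    by (simp add: r_def algebra_simps)
  finally show "0 \<le> s * c + 4 * K * (norm d + 1) * s\<^sup>2" .
qed

lemma isCont_if_lipschitz_at:
  fixes f :: "'a::real_normed_vector \<Rightarrow> 'b::real_normed_vector"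
  assumes "d > 0" and "\<And>y. norm (y - x) \<le> d \<Longrightarrow> norm (f y - f x) \<le> L * norm (y - x)"
  shows "isCont f x"
proof -
  have "\<forall>\<^sub>F y in at x. norm (f y - f x) \<le> L * norm (y - x)"
    using assms eventually_at[of _ x UNIV] by (force simp: dist_norm)
  moreover have "((\<lambda>y. L * norm (y - x)) \<longlongrightarrow> 0) (at x)"
    by (intro tendsto_eq_intros) auto
  ultimately have "((\<lambda>y. f y - f x) \<longlongrightarrow> 0) (at x)"
    by (rule Lim_null_comparison)
  then show ?thesis
    unfolding isCont_def by (rule LIM_zero_cancel)
qed

section \<open>Solutions and their first variation\<close>

definition lin_sol :: "real \<Rightarrow> (real \<Rightarrow> real) \<Rightarrow> real \<Rightarrow> real" where
  "lin_sol c u t = c + prim u t"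

definition sol3 :: "real^4 \<Rightarrow> (real \<Rightarrow> real) \<Rightarrow> (real \<Rightarrow> real) \<Rightarrow> real \<Rightarrow> real" where
  "sol3 a u1 u2 t = a$2 + prim (\<lambda>s. u1 s * lin_sol (a$1) u2 s) t"

definition sol4 :: "real^4 \<Rightarrow> (real \<Rightarrow> real) \<Rightarrow> (real \<Rightarrow> real) \<Rightarrow> real \<Rightarrow> real" where
  "sol4 a u1 u2 t = a$3 + prim (\<lambda>s. u1 s * sol3 a u1 u2 s) t"

definition sol :: "real^4 \<Rightarrow> (real \<Rightarrow> real) \<Rightarrow> (real \<Rightarrow> real) \<Rightarrow> real \<Rightarrow> real^4^4" where
  "sol a u1 u2 t = G4_mat (lin_sol (a$0) u1 t) (lin_sol (a$1) u2 t) (sol3 a u1 u2 t) (sol4 a u1 u2 t)"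

definition endpoint :: "real^4 \<Rightarrow> (real \<Rightarrow> real) \<Rightarrow> (real \<Rightarrow> real) \<Rightarrow> real \<Rightarrow> real^4" where
  "endpoint a u1 u2 T = vec4 (lin_sol (a$0) u1 T) (lin_sol (a$1) u2 T) (sol3 a u1 u2 T) (sol4 a u1 u2 T)"

lemma sol_at_0 [simp]:
  "lin_sol c u 0 = c" "sol3 a u1 u2 0 = a$2" "sol4 a u1 u2 0 = a$3"
  by (simp_all add: lin_sol_def sol3_def sol4_def)

lemma continuous_on_lin_sol [continuous_intros]:
  "continuous_on {0..T} u \<Longrightarrow> continuous_on {0..T} (lin_sol c u)"
  unfolding lin_sol_def by (intro continuous_intros)

lemma continuous_on_sol3 [continuous_intros]:
  "continuous_on {0..T} u1 \<Longrightarrow> continuous_on {0..T} u2 \<Longrightarrow> continuous_on {0..T} (sol3 a u1 u2)"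
  unfolding sol3_def by (intro continuous_intros)

context
  fixes T :: real and u1 u2 :: "real \<Rightarrow> real"
  assumes cu1: "continuous_on {0..T} u1" and cu2: "continuous_on {0..T} u2"
begin

lemma has_real_derivative_sol:
  assumes "t \<in> {0..T}"
  shows "(lin_sol c u1 has_real_derivative u1 t) (at t within {0..T})"
    and "(lin_sol c u2 has_real_derivative u2 t) (at t within {0..T})"
    and "(sol3 a u1 u2 has_real_derivative u1 t * lin_sol (a$1) u2 t) (at t within {0..T})"
    and "(sol4 a u1 u2 has_real_derivative u1 t * sol3 a u1 u2 t) (at t within {0..T})"
  unfolding lin_sol_def sol3_def sol4_def using assms cu1 cu2
  by (auto intro!: derivative_eq_intros continuous_intros)

lemma trajectory_sol: "trajectory T u1 u2 (sol a u1 u2)"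
  unfolding sol_def by (rule trajectory_of_coordinates) (use has_real_derivative_sol in auto)

lemma trajectory_eq_sol:
  assumes X: "trajectory T u1 u2 X" and X0: "X 0 = G4_mat (a$0) (a$1) (a$2) (a$3)"
    and t: "t \<in> {0..T}"
  shows "X t = sol a u1 u2 t"
proof -
  note coord = trajectory_coordinates[OF X]
  have x1: "X s $ 1 $ 2 = lin_sol (a$0) u1 s" if "s \<in> {0..T}" for s
    using eq_prim_if_has_derivative[OF cu1 coord(2) that] X0 by (simp add: lin_sol_def)
  have x2: "X s $ 0 $ 1 = lin_sol (a$1) u2 s" if "s \<in> {0..T}" for s
    using eq_prim_if_has_derivative[OF cu2 coord(3) that] X0 by (simp add: lin_sol_def)
  have x3: "X s $ 0 $ 2 = sol3 a u1 u2 s" if "s \<in> {0..T}" for s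
  proof -
    have "X s $ 0 $ 2 = X 0 $ 0 $ 2 + prim (\<lambda>s. u1 s * lin_sol (a$1) u2 s) s"
      by (rule eq_prim_if_has_derivative[OF _ _ that])
        (use coord(4) x2 in \<open>auto intro!: continuous_intros cu1 cu2\<close>)
    then show ?thesis
      by (simp add: X0 sol3_def)
  qed
  have x4: "X s $ 0 $ 3 = sol4 a u1 u2 s" if "s \<in> {0..T}" for s
  proof -
    have "X s $ 0 $ 3 = X 0 $ 0 $ 3 + prim (\<lambda>s. u1 s * sol3 a u1 u2 s) s"
      by (rule eq_prim_if_has_derivative[OF _ _ that])
        (use coord(5) x3 in \<open>auto intro!: continuous_intros cu1 cu2\<close>)
    then show ?thesis
      by (simp add: X0 sol4_def)
  qed
  show ?thesis
    using coord(1)[OF t] x1[OF t] x2[OF t] x3[OF t] x4[OF t] by (simp add: sol_def)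
qed

end

definition var3 :: "real^4 \<Rightarrow> (real \<Rightarrow> real) \<Rightarrow> (real \<Rightarrow> real) \<Rightarrow>
    (real \<Rightarrow> real) \<Rightarrow> (real \<Rightarrow> real) \<Rightarrow> real \<Rightarrow> real" where
  "var3 a u1 u2 b1 b2 t = prim (\<lambda>s. b1 s * lin_sol (a$1) u2 s + u1 s * prim b2 s) t"

definition var4 :: "real^4 \<Rightarrow> (real \<Rightarrow> real) \<Rightarrow> (real \<Rightarrow> real) \<Rightarrow>
    (real \<Rightarrow> real) \<Rightarrow> (real \<Rightarrow> real) \<Rightarrow> real \<Rightarrow> real" where
  "var4 a u1 u2 b1 b2 t = prim (\<lambda>s. b1 s * sol3 a u1 u2 s + u1 s * var3 a u1 u2 b1 b2 s) t"

definition variation :: "real^4 \<Rightarrow> (real \<Rightarrow> real) \<Rightarrow> (real \<Rightarrow> real) \<Rightarrow>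
    (real \<Rightarrow> real) \<Rightarrow> (real \<Rightarrow> real) \<Rightarrow> real \<Rightarrow> real^4" where
  "variation a u1 u2 b1 b2 T = vec4 (prim b1 T) (prim b2 T) (var3 a u1 u2 b1 b2 T) (var4 a u1 u2 b1 b2 T)"

context
  fixes T :: real and u1 u2 b1 b2 :: "real \<Rightarrow> real"
  assumes cu1: "continuous_on {0..T} u1" and cu2: "continuous_on {0..T} u2"
    and cb1: "continuous_on {0..T} b1" and cb2: "continuous_on {0..T} b2"
begin

lemma continuous_on_var3 [continuous_intros]: "continuous_on {0..T} (var3 a u1 u2 b1 b2)"
  unfolding var3_def by (intro continuous_intros cu1 cu2 cb1 cb2)

lemma continuous_on_var4 [continuous_intros]: "continuous_on {0..T} (var4 a u1 u2 b1 b2)"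
  unfolding var4_def by (intro continuous_intros cu1 cu2 cb1 cb2)

lemma has_real_derivative_var:
  assumes "t \<in> {0..T}"
  shows "(var3 a u1 u2 b1 b2 has_real_derivative
      b1 t * lin_sol (a$1) u2 t + u1 t * prim b2 t) (at t within {0..T})"
    and "(var4 a u1 u2 b1 b2 has_real_derivative
      b1 t * sol3 a u1 u2 t + u1 t * var3 a u1 u2 b1 b2 t) (at t within {0..T})"
  using assms unfolding var3_def[of a u1 u2 b1 b2] var4_def[of a u1 u2 b1 b2]
  by (intro has_real_derivative_prim continuous_intros cu1 cu2 cb1 cb2; simp)+

lemma lin_sol_add:
  assumes "t \<in> {0..T}"
  shows "lin_sol c (\<lambda>t. u2 t + b2 t) t = lin_sol c u2 t + prim b2 t"
  using prim_add[OF cu2 cb2 assms] by (simp add: lin_sol_def)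

lemma sol3_add:
  assumes t: "t \<in> {0..T}"
  shows "sol3 a (\<lambda>t. u1 t + b1 t) (\<lambda>t. u2 t + b2 t) t
    = sol3 a u1 u2 t + var3 a u1 u2 b1 b2 t + prim (\<lambda>s. b1 s * prim b2 s) t"
proof -
  let ?q = "\<lambda>t. sol3 a (\<lambda>t. u1 t + b1 t) (\<lambda>t. u2 t + b2 t) t - sol3 a u1 u2 t - var3 a u1 u2 b1 b2 t"
  have cv1: "continuous_on {0..T} (\<lambda>t. u1 t + b1 t)" and cv2: "continuous_on {0..T} (\<lambda>t. u2 t + b2 t)"
    by (intro continuous_intros cu1 cu2 cb1 cb2)+
  have "?q t = ?q 0 + prim (\<lambda>s. b1 s * prim b2 s) t"
  proof (rule eq_prim_if_has_derivative[OF _ _ t])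
    show "continuous_on {0..T} (\<lambda>s. b1 s * prim b2 s)"
      using cb1 cb2 by (intro continuous_intros)
    fix s assume s: "s \<in> {0..T}"
    show "(?q has_real_derivative b1 s * prim b2 s) (at s within {0..T})"
      using has_real_derivative_sol(3)[OF cv1 cv2 s] has_real_derivative_sol(3)[OF cu1 cu2 s]
        has_real_derivative_var(1)[OF s]
      unfolding lin_sol_add[OF s] by (auto intro!: derivative_eq_intros simp: algebra_simps)
  qed
  then show ?thesis
    by (simp add: var3_def)
qed

lemma sol4_add:
  assumes t: "t \<in> {0..T}"
  defines "\<rho> \<equiv> prim (\<lambda>s. b1 s * prim b2 s)"
  shows "sol4 a (\<lambda>t. u1 t + b1 t) (\<lambda>t. u2 t + b2 t) t
    = sol4 a u1 u2 t + var4 a u1 u2 b1 b2 t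
      + prim (\<lambda>s. u1 s * \<rho> s + b1 s * (var3 a u1 u2 b1 b2 s + \<rho> s)) t"
proof -
  let ?q = "\<lambda>t. sol4 a (\<lambda>t. u1 t + b1 t) (\<lambda>t. u2 t + b2 t) t - sol4 a u1 u2 t - var4 a u1 u2 b1 b2 t"
  have cv1: "continuous_on {0..T} (\<lambda>t. u1 t + b1 t)" and cv2: "continuous_on {0..T} (\<lambda>t. u2 t + b2 t)"
    by (intro continuous_intros cu1 cu2 cb1 cb2)+
  have "?q t = ?q 0 + prim (\<lambda>s. u1 s * \<rho> s + b1 s * (var3 a u1 u2 b1 b2 s + \<rho> s)) t"
  proof (rule eq_prim_if_has_derivative[OF _ _ t])
    show "continuous_on {0..T} (\<lambda>s. u1 s * \<rho> s + b1 s * (var3 a u1 u2 b1 b2 s + \<rho> s))"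
      unfolding \<rho>_def by (intro continuous_intros cu1 cb1 cb2)
    fix s assume s: "s \<in> {0..T}"
    show "(?q has_real_derivative u1 s * \<rho> s + b1 s * (var3 a u1 u2 b1 b2 s + \<rho> s)) (at s within {0..T})"
      using has_real_derivative_sol(4)[OF cv1 cv2 s] has_real_derivative_sol(4)[OF cu1 cu2 s]
        has_real_derivative_var(2)[OF s]
      unfolding sol3_add[OF s] \<rho>_def by (auto intro!: derivative_eq_intros simp: algebra_simps)
  qed
  then show ?thesis
    by (simp add: var4_def)
qed

end

lemma abs_mult_le: "\<bar>x\<bar> \<le> A \<Longrightarrow> \<bar>y\<bar> \<le> B \<Longrightarrow> \<bar>x * y\<bar> \<le> A * (B::real)"
  by (simp add: abs_mult mult_mono')

lemma abs_add_le: "\<bar>x\<bar> \<le> A \<Longrightarrow> \<bar>y\<bar> \<le> B \<Longrightarrow> \<bar>x + y\<bar> \<le> A + (B::real)"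
  by linarith

lemma endpoint_remainder_eq:
  assumes "0 \<le> T" and cu1: "continuous_on {0..T} u1" and cu2: "continuous_on {0..T} u2"
    and cb1: "continuous_on {0..T} b1" and cb2: "continuous_on {0..T} b2"
  defines "\<rho> \<equiv> prim (\<lambda>s. b1 s * prim b2 s)"
  shows "endpoint a (\<lambda>t. u1 t + b1 t) (\<lambda>t. u2 t + b2 t) T - endpoint a u1 u2 T - variation a u1 u2 b1 b2 T
    = vec4 0 0 (\<rho> T) (prim (\<lambda>s. u1 s * \<rho> s + b1 s * (var3 a u1 u2 b1 b2 s + \<rho> s)) T)"
proof -
  have T: "T \<in> {0..T}"
    using \<open>0 \<le> T\<close> by simp
  show ?thesis
    unfolding endpoint_def variation_def vec4_diff \<rho>_def
    using lin_sol_add[OF cu1 cu2 cb1 cb2 T] lin_sol_add[OF cu2 cu1 cb2 cb1 T]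
      sol3_add[OF cu1 cu2 cb1 cb2 T] sol4_add[OF cu1 cu2 cb1 cb2 T]
    by (simp add: lin_sol_def)
qed

context
  fixes T M \<beta> :: real and a :: "real^4" and u1 u2 b1 b2 :: "real \<Rightarrow> real"
  assumes T: "0 \<le> T" and cu1: "continuous_on {0..T} u1" and cu2: "continuous_on {0..T} u2"
    and cb1: "continuous_on {0..T} b1" and cb2: "continuous_on {0..T} b2"
    and M: "\<And>t. t \<in> {0..T} \<Longrightarrow>
      \<bar>u1 t\<bar> \<le> M \<and> \<bar>lin_sol (a$1) u2 t\<bar> \<le> M \<and> \<bar>sol3 a u1 u2 t\<bar> \<le> M"
    and b: "\<And>t. t \<in> {0..T} \<Longrightarrow> \<bar>b1 t\<bar> \<le> \<beta> \<and> \<bar>b2 t\<bar> \<le> \<beta>"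
begin

lemma abs_prim_perturbation_le:
  assumes "t \<in> {0..T}"
  shows "\<bar>prim b1 t\<bar> \<le> T * \<beta>" and "\<bar>prim b2 t\<bar> \<le> T * \<beta>"
    and "\<bar>prim (\<lambda>s. b1 s * prim b2 s) t\<bar> \<le> T * (\<beta> * (T * \<beta>))"
proof -
  have pb: "\<bar>prim b1 t\<bar> \<le> T * \<beta>" "\<bar>prim b2 t\<bar> \<le> T * \<beta>" if "t \<in> {0..T}" for t
    using abs_prim_le[OF cb1 _ that] abs_prim_le[OF cb2 _ that] b by blast+
  then show "\<bar>prim b1 t\<bar> \<le> T * \<beta>" and "\<bar>prim b2 t\<bar> \<le> T * \<beta>"
    using assms by blast+
  show "\<bar>prim (\<lambda>s. b1 s * prim b2 s) t\<bar> \<le> T * (\<beta> * (T * \<beta>))"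
    by (rule abs_prim_le[OF _ _ assms])
      (use b pb cb1 cb2 in \<open>auto intro!: continuous_intros abs_mult_le\<close>)
qed

lemma abs_var3_le:
  assumes "t \<in> {0..T}"
  shows "\<bar>var3 a u1 u2 b1 b2 t\<bar> \<le> T * (\<beta> * M + M * (T * \<beta>))"
  unfolding var3_def
  by (rule abs_prim_le[OF _ _ assms])
    (use b abs_prim_perturbation_le M cb1 cb2 cu1 cu2 in
      \<open>auto intro!: continuous_intros abs_mult_le abs_add_le\<close>)

lemma norm_variation_le:
  "norm (variation a u1 u2 b1 b2 T)
    \<le> (T + T + T * (M + M * T) + T * (M + M * (T * (M + M * T)))) * \<beta>"
proof -
  have TT: "T \<in> {0..T}"
    using T by simp
  have "\<bar>var4 a u1 u2 b1 b2 T\<bar> \<le> T * (\<beta> * M + M * (T * (\<beta> * M + M * (T * \<beta>))))"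
    unfolding var4_def
    by (rule abs_prim_le[OF _ _ TT])
      (use b abs_var3_le M cb1 cb2 cu1 cu2 in \<open>auto intro!: continuous_intros abs_mult_le abs_add_le\<close>)
  then have "norm (variation a u1 u2 b1 b2 T) \<le> T * \<beta> + T * \<beta> + T * (\<beta> * M + M * (T * \<beta>))
      + T * (\<beta> * M + M * (T * (\<beta> * M + M * (T * \<beta>))))"
    using abs_prim_perturbation_le[OF TT] abs_var3_le[OF TT] unfolding variation_def
    by (intro order_trans[OF norm_vec4_le] add_mono)
  then show ?thesis
    by (simp add: algebra_simps)
qed

lemma norm_endpoint_remainder_le:
  assumes "\<beta> \<le> 1"
  shows "norm (endpoint a (\<lambda>t. u1 t + b1 t) (\<lambda>t. u2 t + b2 t) T - endpoint a u1 u2 T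
      - variation a u1 u2 b1 b2 T)
    \<le> (T * T + (T * (M * (T * T)) + T * (T * (M + M * T)) + T * (T * T))) * \<beta>\<^sup>2"
proof -
  have TT: "T \<in> {0..T}" and "\<beta> \<ge> 0"
    using T b[of T] by auto
  let ?\<rho> = "prim (\<lambda>s. b1 s * prim b2 s)"
  have "\<bar>prim (\<lambda>s. u1 s * ?\<rho> s + b1 s * (var3 a u1 u2 b1 b2 s + ?\<rho> s)) T\<bar>
    \<le> T * (M * (T * (\<beta> * (T * \<beta>))) + \<beta> * (T * (\<beta> * M + M * (T * \<beta>)) + T * (\<beta> * (T * \<beta>))))"
    by (rule abs_prim_le[OF _ _ TT])
      (use b abs_var3_le abs_prim_perturbation_le M cb1 cb2 cu1 cu2 in
        \<open>auto intro!: continuous_intros abs_mult_le abs_add_le\<close>)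
  then have "norm (endpoint a (\<lambda>t. u1 t + b1 t) (\<lambda>t. u2 t + b2 t) T - endpoint a u1 u2 T
      - variation a u1 u2 b1 b2 T) \<le> T * (\<beta> * (T * \<beta>)) + T * (M * (T * (\<beta> * (T * \<beta>)))
        + \<beta> * (T * (\<beta> * M + M * (T * \<beta>)) + T * (\<beta> * (T * \<beta>))))"
    using abs_prim_perturbation_le(3)[OF TT]
    unfolding endpoint_remainder_eq[OF T cu1 cu2 cb1 cb2]
    by (intro order_trans[OF norm_vec4_le]) simp
  moreover have "T * (T * T) * \<beta> ^ 3 \<le> T * (T * T) * \<beta>\<^sup>2"
    using T \<open>\<beta> \<ge> 0\<close> \<open>\<beta> \<le> 1\<close> by (simp add: power_decreasing mult_left_mono)
  ultimately show ?thesis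
    by (simp add: algebra_simps power2_eq_square power3_eq_cube)
qed

end

lemma endpoint_expansion:
  assumes T: "0 \<le> T" and cu1: "continuous_on {0..T} u1" and cu2: "continuous_on {0..T} u2"
  obtains K where "K \<ge> 0"
    and "\<And>b1 b2 \<beta>. continuous_on {0..T} b1 \<Longrightarrow> continuous_on {0..T} b2 \<Longrightarrow>
      (\<And>t. t \<in> {0..T} \<Longrightarrow> \<bar>b1 t\<bar> \<le> \<beta> \<and> \<bar>b2 t\<bar> \<le> \<beta>) \<Longrightarrow> \<beta> \<le> 1 \<Longrightarrow>
      norm (variation a u1 u2 b1 b2 T) \<le> K * \<beta>"
    and "\<And>b1 b2 \<beta>. continuous_on {0..T} b1 \<Longrightarrow> continuous_on {0..T} b2 \<Longrightarrow>
      (\<And>t. t \<in> {0..T} \<Longrightarrow> \<bar>b1 t\<bar> \<le> \<beta> \<and> \<bar>b2 t\<bar> \<le> \<beta>) \<Longrightarrow> \<beta> \<le> 1 \<Longrightarrow>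
      norm (endpoint a (\<lambda>t. u1 t + b1 t) (\<lambda>t. u2 t + b2 t) T - endpoint a u1 u2 T
        - variation a u1 u2 b1 b2 T) \<le> K * \<beta>\<^sup>2"
proof -
  obtain M1 where "M1 \<ge> 1" "\<And>t. t \<in> {0..T} \<Longrightarrow> \<bar>u1 t\<bar> \<le> M1"
    using continuous_on_Icc_abs_bounded[OF cu1] by blast
  moreover obtain M2 where "M2 \<ge> 1" "\<And>t. t \<in> {0..T} \<Longrightarrow> \<bar>lin_sol (a$1) u2 t\<bar> \<le> M2"
    using continuous_on_Icc_abs_bounded[OF continuous_on_lin_sol[OF cu2]] by blast
  moreover obtain M3 where "M3 \<ge> 1" "\<And>t. t \<in> {0..T} \<Longrightarrow> \<bar>sol3 a u1 u2 t\<bar> \<le> M3"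
    using continuous_on_Icc_abs_bounded[OF continuous_on_sol3[OF cu1 cu2]] by blast
  ultimately have "\<bar>u1 t\<bar> \<le> M1 + M2 + M3 \<and> \<bar>lin_sol (a$1) u2 t\<bar> \<le> M1 + M2 + M3
      \<and> \<bar>sol3 a u1 u2 t\<bar> \<le> M1 + M2 + M3" and "M1 + M2 + M3 \<ge> 0" if "t \<in> {0..T}" for t
    using that by force+
  note bounds = this
  let ?M = "M1 + M2 + M3"
  let ?Kl = "T + T + T * (?M + ?M * T) + T * (?M + ?M * (T * (?M + ?M * T)))"
  let ?Kq = "T * T + (T * (?M * (T * T)) + T * (T * (?M + ?M * T)) + T * (T * T))"
  have "?Kl \<ge> 0" and "?Kq \<ge> 0"
    using T \<open>M1 \<ge> 1\<close> \<open>M2 \<ge> 1\<close> \<open>M3 \<ge> 1\<close> by simp_all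
  show ?thesis
  proof (rule that[of "?Kl + ?Kq"])
    fix b1 b2 and \<beta> :: real
    assume cb: "continuous_on {0..T} b1" "continuous_on {0..T} b2"
      and b: "\<And>t. t \<in> {0..T} \<Longrightarrow> \<bar>b1 t\<bar> \<le> \<beta> \<and> \<bar>b2 t\<bar> \<le> \<beta>" and "\<beta> \<le> 1"
    have "\<beta> \<ge> 0"
      using T b[of T] by auto
    have "?Kl * \<beta> \<le> (?Kl + ?Kq) * \<beta>" and "?Kq * \<beta>\<^sup>2 \<le> (?Kl + ?Kq) * \<beta>\<^sup>2"
      using \<open>?Kl \<ge> 0\<close> \<open>?Kq \<ge> 0\<close> \<open>\<beta> \<ge> 0\<close> by (intro mult_right_mono; simp)+
    then show "norm (variation a u1 u2 b1 b2 T) \<le> (?Kl + ?Kq) * \<beta>"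
      and "norm (endpoint a (\<lambda>t. u1 t + b1 t) (\<lambda>t. u2 t + b2 t) T - endpoint a u1 u2 T
        - variation a u1 u2 b1 b2 T) \<le> (?Kl + ?Kq) * \<beta>\<^sup>2"
      using norm_variation_le[OF T cu1 cu2 cb bounds(1) b]
        norm_endpoint_remainder_le[OF T cu1 cu2 cb bounds(1) b \<open>\<beta> \<le> 1\<close>] by linarith+
  qed (use \<open>?Kl \<ge> 0\<close> \<open>?Kq \<ge> 0\<close> in simp)
qed

lemma endpoint_lipschitz:
  assumes T: "0 \<le> T" and cu1: "continuous_on {0..T} u1" and cu2: "continuous_on {0..T} u2"
  obtains K where "K \<ge> 0"
    and "\<And>b1 b2 \<beta>. continuous_on {0..T} b1 \<Longrightarrow> continuous_on {0..T} b2 \<Longrightarrow>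
      (\<And>t. t \<in> {0..T} \<Longrightarrow> \<bar>b1 t\<bar> \<le> \<beta> \<and> \<bar>b2 t\<bar> \<le> \<beta>) \<Longrightarrow> \<beta> \<le> 1 \<Longrightarrow>
      norm (endpoint a (\<lambda>t. u1 t + b1 t) (\<lambda>t. u2 t + b2 t) T - endpoint a u1 u2 T) \<le> K * \<beta>"
proof -
  obtain K where "K \<ge> 0"
    and var_le: "\<And>b1 b2 \<beta>. continuous_on {0..T} b1 \<Longrightarrow> continuous_on {0..T} b2 \<Longrightarrow>
      (\<And>t. t \<in> {0..T} \<Longrightarrow> \<bar>b1 t\<bar> \<le> \<beta> \<and> \<bar>b2 t\<bar> \<le> \<beta>) \<Longrightarrow> \<beta> \<le> 1 \<Longrightarrow>
      norm (variation a u1 u2 b1 b2 T) \<le> K * \<beta>"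
    and rem_le: "\<And>b1 b2 \<beta>. continuous_on {0..T} b1 \<Longrightarrow> continuous_on {0..T} b2 \<Longrightarrow>
      (\<And>t. t \<in> {0..T} \<Longrightarrow> \<bar>b1 t\<bar> \<le> \<beta> \<and> \<bar>b2 t\<bar> \<le> \<beta>) \<Longrightarrow> \<beta> \<le> 1 \<Longrightarrow>
      norm (endpoint a (\<lambda>t. u1 t + b1 t) (\<lambda>t. u2 t + b2 t) T - endpoint a u1 u2 T
        - variation a u1 u2 b1 b2 T) \<le> K * \<beta>\<^sup>2"
    by (rule endpoint_expansion[OF T cu1 cu2, of a]) blast
  show ?thesis
  proof (rule that[of "2 * K"])
    fix b1 b2 and \<beta> :: real
    assume cb: "continuous_on {0..T} b1" "continuous_on {0..T} b2"
      and b: "\<And>t. t \<in> {0..T} \<Longrightarrow> \<bar>b1 t\<bar> \<le> \<beta> \<and> \<bar>b2 t\<bar> \<le> \<beta>" and "\<beta> \<le> 1"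
    have "\<beta> \<ge> 0"
      using T b[of T] by auto
    then have "K * \<beta>\<^sup>2 \<le> K * \<beta>"
      using \<open>K \<ge> 0\<close> \<open>\<beta> \<le> 1\<close> by (intro mult_left_mono) (simp_all add: power2_eq_square mult_left_le)
    then show "norm (endpoint a (\<lambda>t. u1 t + b1 t) (\<lambda>t. u2 t + b2 t) T - endpoint a u1 u2 T) \<le> 2 * K * \<beta>"
      using order_trans[OF norm_triangle_sub add_mono[OF var_le[OF cb b \<open>\<beta> \<le> 1\<close>] rem_le[OF cb b \<open>\<beta> \<le> 1\<close>]]]
      by simp
  qed (use \<open>K \<ge> 0\<close> in simp)
qed

context
  fixes T :: real and u1 u2 f1 f2 g1 g2 :: "real \<Rightarrow> real" and c d :: real
  assumes cu1: "continuous_on {0..T} u1" and cu2: "continuous_on {0..T} u2"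
    and cf1: "continuous_on {0..T} f1" and cf2: "continuous_on {0..T} f2"
    and cg1: "continuous_on {0..T} g1" and cg2: "continuous_on {0..T} g2"
begin

lemma var3_lincomb:
  assumes t: "t \<in> {0..T}"
  shows "var3 a u1 u2 (\<lambda>s. c * f1 s + d * g1 s) (\<lambda>s. c * f2 s + d * g2 s) t
    = c * var3 a u1 u2 f1 f2 t + d * var3 a u1 u2 g1 g2 t"
proof -
  have "var3 a u1 u2 (\<lambda>s. c * f1 s + d * g1 s) (\<lambda>s. c * f2 s + d * g2 s) t
    = prim (\<lambda>s. c * (f1 s * lin_sol (a$1) u2 s + u1 s * prim f2 s)
        + d * (g1 s * lin_sol (a$1) u2 s + u1 s * prim g2 s)) t"
    unfolding var3_def
    by (rule prim_cong) (use t in \<open>simp add: prim_lincomb[OF cf2 cg2] algebra_simps\<close>)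
  also have "\<dots> = c * var3 a u1 u2 f1 f2 t + d * var3 a u1 u2 g1 g2 t"
    unfolding var3_def
    by (rule prim_lincomb[OF _ _ t]) (intro continuous_intros cu1 cu2 cf1 cf2 cg1 cg2)+
  finally show ?thesis .
qed

lemma var4_lincomb:
  assumes t: "t \<in> {0..T}"
  shows "var4 a u1 u2 (\<lambda>s. c * f1 s + d * g1 s) (\<lambda>s. c * f2 s + d * g2 s) t
    = c * var4 a u1 u2 f1 f2 t + d * var4 a u1 u2 g1 g2 t"
proof -
  have "var4 a u1 u2 (\<lambda>s. c * f1 s + d * g1 s) (\<lambda>s. c * f2 s + d * g2 s) t
    = prim (\<lambda>s. c * (f1 s * sol3 a u1 u2 s + u1 s * var3 a u1 u2 f1 f2 s)
        + d * (g1 s * sol3 a u1 u2 s + u1 s * var3 a u1 u2 g1 g2 s)) t"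
    unfolding var4_def
    by (rule prim_cong) (use t in \<open>simp add: var3_lincomb algebra_simps\<close>)
  also have "\<dots> = c * var4 a u1 u2 f1 f2 t + d * var4 a u1 u2 g1 g2 t"
    unfolding var4_def
    by (rule prim_lincomb[OF _ _ t]) (intro continuous_intros cu1 cu2 cf1 cf2 cg1 cg2)+
  finally show ?thesis .
qed

lemma variation_lincomb:
  assumes "0 \<le> T"
  shows "variation a u1 u2 (\<lambda>s. c * f1 s + d * g1 s) (\<lambda>s. c * f2 s + d * g2 s) T
    = c *\<^sub>R variation a u1 u2 f1 f2 T + d *\<^sub>R variation a u1 u2 g1 g2 T"
  using assms unfolding variation_def vec4_scaleR vec4_add
  by (simp add: prim_lincomb[OF cf1 cg1] prim_lincomb[OF cf2 cg2] var3_lincomb var4_lincomb)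

end

lemma lincomb_imp_sum:
  fixes L :: "(real \<Rightarrow> real) \<Rightarrow> (real \<Rightarrow> real) \<Rightarrow> 'a::real_vector"
    and C :: "(real \<Rightarrow> real) \<Rightarrow> bool"
  assumes L: "\<And>f1 f2 g1 g2 c d. C f1 \<Longrightarrow> C f2 \<Longrightarrow> C g1 \<Longrightarrow> C g2 \<Longrightarrow>
      L (\<lambda>s. c * f1 s + d * g1 s) (\<lambda>s. c * f2 s + d * g2 s) = c *\<^sub>R L f1 f2 + d *\<^sub>R L g1 g2"
    and C: "\<And>f g c d. C f \<Longrightarrow> C g \<Longrightarrow> C (\<lambda>s. c * f s + d * g s)"
    and f: "\<And>k. C (f k)" and g: "\<And>k. C (g k)"
    and "finite A"
  shows "L (\<lambda>t. \<Sum>k\<in>A. e k * f k t) (\<lambda>t. \<Sum>k\<in>A. e k * g k t) = (\<Sum>k\<in>A. e k *\<^sub>R L (f k) (g k))"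
proof -
  have "C (\<lambda>t. \<Sum>k\<in>A. e k * f k t) \<and> C (\<lambda>t. \<Sum>k\<in>A. e k * g k t) \<and>
      L (\<lambda>t. \<Sum>k\<in>A. e k * f k t) (\<lambda>t. \<Sum>k\<in>A. e k * g k t) = (\<Sum>k\<in>A. e k *\<^sub>R L (f k) (g k))"
    using \<open>finite A\<close>
  proof (induction A rule: finite_induct)
    case empty
    have "L (\<lambda>s. 0 * f x s + 0 * f x s) (\<lambda>s. 0 * g x s + 0 * g x s)
      = 0 *\<^sub>R L (f x) (g x) + 0 *\<^sub>R L (f x) (g x)"
      and "C (\<lambda>s. 0 * f x s + 0 * f x s)" and "C (\<lambda>s. 0 * g x s + 0 * g x s)" for x
      using L f g C by blast+
    then show ?case
      by simp
  next
    case (insert x A)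
    then show ?case
      using L[of "f x" "g x" "\<lambda>t. \<Sum>k\<in>A. e k * f k t" "\<lambda>t. \<Sum>k\<in>A. e k * g k t" "e x" 1]
        C[of "f x" "\<lambda>t. \<Sum>k\<in>A. e k * f k t" "e x" 1]
        C[of "g x" "\<lambda>t. \<Sum>k\<in>A. e k * g k t" "e x" 1] f g
      by simp
  qed
  then show ?thesis
    by blast
qed

lemma variation_sum:
  assumes "0 \<le> T" and "continuous_on {0..T} u1" and "continuous_on {0..T} u2"
    and "\<And>k. continuous_on {0..T} (f k)" and "\<And>k. continuous_on {0..T} (g k)" and "finite A"
  shows "variation a u1 u2 (\<lambda>t. \<Sum>k\<in>A. e k * f k t) (\<lambda>t. \<Sum>k\<in>A. e k * g k t) T
    = (\<Sum>k\<in>A. e k *\<^sub>R variation a u1 u2 (f k) (g k) T)"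
  by (rule lincomb_imp_sum[where C = "continuous_on {0..T}"])
    (use assms variation_lincomb in \<open>auto intro!: continuous_intros\<close>)

definition cost_variation :: "real \<Rightarrow> real \<Rightarrow> (real \<Rightarrow> real) \<Rightarrow> (real \<Rightarrow> real) \<Rightarrow> real \<Rightarrow>
    (real \<Rightarrow> real) \<Rightarrow> (real \<Rightarrow> real) \<Rightarrow> real" where
  "cost_variation c1 c2 u1 u2 T b1 b2 = prim (\<lambda>t. c1 * u1 t * b1 t + c2 * u2 t * b2 t) T"

lemma cost_add:
  assumes T: "0 \<le> T" and "continuous_on {0..T} u1" "continuous_on {0..T} u2"
    "continuous_on {0..T} b1" "continuous_on {0..T} b2"
  shows "cost c1 c2 T (\<lambda>t. u1 t + b1 t) (\<lambda>t. u2 t + b2 t) = cost c1 c2 T u1 u2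
    + cost_variation c1 c2 u1 u2 T b1 b2 + 1/2 * prim (\<lambda>t. c1 * (b1 t)\<^sup>2 + c2 * (b2 t)\<^sup>2) T"
proof -
  have Tin: "T \<in> {0..T}"
    using T by simp
  have "cost c1 c2 T (\<lambda>t. u1 t + b1 t) (\<lambda>t. u2 t + b2 t)
    = 1/2 * prim (\<lambda>t. (c1 * (u1 t)\<^sup>2 + c2 * (u2 t)\<^sup>2)
        + (2 * (c1 * u1 t * b1 t + c2 * u2 t * b2 t) + (c1 * (b1 t)\<^sup>2 + c2 * (b2 t)\<^sup>2))) T"
    unfolding cost_def prim_def by (simp add: power2_eq_square algebra_simps)
  also have "\<dots> = 1/2 * (prim (\<lambda>t. c1 * (u1 t)\<^sup>2 + c2 * (u2 t)\<^sup>2) T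
      + (prim (\<lambda>t. 2 * (c1 * u1 t * b1 t + c2 * u2 t * b2 t)) T
      + prim (\<lambda>t. c1 * (b1 t)\<^sup>2 + c2 * (b2 t)\<^sup>2) T))"
    using assms by (simp add: prim_add[OF _ _ Tin] continuous_intros)
  also have "\<dots> = cost c1 c2 T u1 u2 + cost_variation c1 c2 u1 u2 T b1 b2
      + 1/2 * prim (\<lambda>t. c1 * (b1 t)\<^sup>2 + c2 * (b2 t)\<^sup>2) T"
    unfolding prim_cmult by (simp add: cost_def cost_variation_def prim_def algebra_simps)
  finally show ?thesis .
qed

lemma cost_variation_lincomb:
  assumes "0 \<le> T" and "continuous_on {0..T} u1" "continuous_on {0..T} u2"
    "continuous_on {0..T} f1" "continuous_on {0..T} f2" "continuous_on {0..T} g1" "continuous_on {0..T} g2"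
  shows "cost_variation c1 c2 u1 u2 T (\<lambda>s. c * f1 s + d * g1 s) (\<lambda>s. c * f2 s + d * g2 s)
    = c * cost_variation c1 c2 u1 u2 T f1 f2 + d * cost_variation c1 c2 u1 u2 T g1 g2"
proof -
  have "cost_variation c1 c2 u1 u2 T (\<lambda>s. c * f1 s + d * g1 s) (\<lambda>s. c * f2 s + d * g2 s)
    = prim (\<lambda>t. c * (c1 * u1 t * f1 t + c2 * u2 t * f2 t) + d * (c1 * u1 t * g1 t + c2 * u2 t * g2 t)) T"
    unfolding cost_variation_def by (simp add: algebra_simps)
  also have "\<dots> = c * cost_variation c1 c2 u1 u2 T f1 f2 + d * cost_variation c1 c2 u1 u2 T g1 g2"
    unfolding cost_variation_def
    by (rule prim_lincomb) (use assms in \<open>auto intro!: continuous_intros\<close>)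
  finally show ?thesis .
qed

lemma cost_variation_sum:
  assumes "0 \<le> T" and "continuous_on {0..T} u1" and "continuous_on {0..T} u2"
    and "\<And>k. continuous_on {0..T} (f k)" and "\<And>k. continuous_on {0..T} (g k)" and "finite A"
  shows "cost_variation c1 c2 u1 u2 T (\<lambda>t. \<Sum>k\<in>A. e k * f k t) (\<lambda>t. \<Sum>k\<in>A. e k * g k t)
    = (\<Sum>k\<in>A. e k * cost_variation c1 c2 u1 u2 T (f k) (g k))"
proof -
  have "cost_variation c1 c2 u1 u2 T (\<lambda>t. \<Sum>k\<in>A. e k * f k t) (\<lambda>t. \<Sum>k\<in>A. e k * g k t)
    = (\<Sum>k\<in>A. e k *\<^sub>R cost_variation c1 c2 u1 u2 T (f k) (g k))"
    by (rule lincomb_imp_sum[where C = "continuous_on {0..T}"])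
      (use assms cost_variation_lincomb in \<open>auto intro!: continuous_intros\<close>)
  then show ?thesis
    by simp
qed

lemma cost_expansion:
  assumes T: "0 \<le> T" and "c1 \<ge> 0" and "c2 \<ge> 0"
    and cu1: "continuous_on {0..T} u1" and cu2: "continuous_on {0..T} u2"
    and cb1: "continuous_on {0..T} b1" and cb2: "continuous_on {0..T} b2"
    and b: "\<And>t. t \<in> {0..T} \<Longrightarrow> \<bar>b1 t\<bar> \<le> \<beta> \<and> \<bar>b2 t\<bar> \<le> \<beta>"
  shows "\<bar>cost c1 c2 T (\<lambda>t. u1 t + b1 t) (\<lambda>t. u2 t + b2 t) - cost c1 c2 T u1 u2
    - cost_variation c1 c2 u1 u2 T b1 b2\<bar> \<le> T * ((c1 + c2) * \<beta>\<^sup>2)"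
proof -
  have "\<bar>prim (\<lambda>t. c1 * (b1 t)\<^sup>2 + c2 * (b2 t)\<^sup>2) T\<bar> \<le> T * ((c1 + c2) * \<beta>\<^sup>2)"
  proof (rule abs_prim_le)
    show "continuous_on {0..T} (\<lambda>t. c1 * (b1 t)\<^sup>2 + c2 * (b2 t)\<^sup>2)"
      using cb1 cb2 by (intro continuous_intros)
    fix t assume t: "t \<in> {0..T}"
    have "(b1 t)\<^sup>2 \<le> \<beta>\<^sup>2" and "(b2 t)\<^sup>2 \<le> \<beta>\<^sup>2"
      using b[OF t] by (auto intro!: power2_le_iff_abs_le[THEN iffD2] simp: abs_le_iff)
    then show "\<bar>c1 * (b1 t)\<^sup>2 + c2 * (b2 t)\<^sup>2\<bar> \<le> (c1 + c2) * \<beta>\<^sup>2"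
      using assms(2,3) by (simp add: algebra_simps add_mono mult_left_mono)
  qed (use T in simp)
  then show ?thesis
    using cost_add[OF T cu1 cu2 cb1 cb2, of c1 c2] by simp
qed

section \<open>Perturbations in all directions\<close>

definition perturbation :: "(real \<Rightarrow> real) \<Rightarrow> (4 \<Rightarrow> real \<Rightarrow> real) \<Rightarrow> real \<Rightarrow> real^4 \<Rightarrow> real \<Rightarrow> real"
  where "perturbation v w s e = (\<lambda>t. s * v t + (\<Sum>k\<in>UNIV. e$k * w k t))"

lemma continuous_on_perturbation [continuous_intros]:
  "continuous_on S v \<Longrightarrow> (\<And>k. continuous_on S (w k)) \<Longrightarrow> continuous_on S (perturbation v w s e)"
  unfolding perturbation_def by (intro continuous_intros) auto

lemma real_polynomial_function_perturbation:
  assumes "real_polynomial_function v" and "\<And>k. real_polynomial_function (w k)"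
  shows "real_polynomial_function (perturbation v w s e)"
  unfolding perturbation_def
proof (intro real_polynomial_function.intros(3) real_polynomial_function_sum)
  show "real_polynomial_function (\<lambda>t. s * v t)"
    by (rule real_polynomial_function.intros(4)[OF real_polynomial_function.intros(2) assms(1)])
  show "real_polynomial_function (\<lambda>t. e$k * w k t)" for k
    by (rule real_polynomial_function.intros(4)[OF real_polynomial_function.intros(2) assms(2)])
qed simp

lemma perturbation_0_0 [simp]: "perturbation v w 0 0 = (\<lambda>t. 0)"
  by (simp add: perturbation_def fun_eq_iff)

lemma perturbation_shift:
  "perturbation v w s e t = perturbation v w s e0 t + perturbation v w 0 (e - e0) t"
  by (simp add: perturbation_def left_diff_distrib sum_subtractf)

lemma abs_perturbation_le:
  assumes cv: "continuous_on {0..T} v" and cw: "\<And>k. continuous_on {0..T} (w k)"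
  obtains M where "M \<ge> 1"
    and "\<And>s e t. t \<in> {0..T} \<Longrightarrow> \<bar>perturbation v w s e t\<bar> \<le> M * (\<bar>s\<bar> + norm e)"
proof -
  obtain Mv where Mv: "Mv \<ge> 1" "\<And>t. t \<in> {0..T} \<Longrightarrow> \<bar>v t\<bar> \<le> Mv"
    using continuous_on_Icc_abs_bounded[OF cv] by blast
  have "\<forall>k. \<exists>M. \<forall>t\<in>{0..T}. \<bar>w k t\<bar> \<le> M"
    using continuous_on_Icc_abs_bounded[OF cw] by metis
  then obtain Mw where Mw: "\<And>k t. t \<in> {0..T} \<Longrightarrow> \<bar>w k t\<bar> \<le> Mw k"
    by metis
  define M where "M = Mv + (\<Sum>k\<in>UNIV. \<bar>Mw k\<bar>)"
  show ?thesis
  proof (rule that[of M])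
    show "M \<ge> 1"
      using Mv(1) by (simp add: M_def sum_nonneg add_increasing2)
    fix s e t assume t: "t \<in> {0..T}"
    have "\<bar>\<Sum>k\<in>UNIV. e$k * w k t\<bar> \<le> (\<Sum>k\<in>UNIV. norm e * \<bar>Mw k\<bar>)"
      using Mw[OF t] component_le_norm_cart[of e]
      by (intro order_trans[OF sum_abs] sum_mono abs_mult_le) (auto intro: order_trans[OF _ abs_ge_self])
    then have "\<bar>perturbation v w s e t\<bar> \<le> \<bar>s\<bar> * Mv + norm e * (\<Sum>k\<in>UNIV. \<bar>Mw k\<bar>)"
      unfolding perturbation_def sum_distrib_left[symmetric]
      using abs_mult_le[OF order.refl Mv(2)[OF t], of s] by linarith
    also have "\<dots> \<le> M * (\<bar>s\<bar> + norm e)"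
      unfolding M_def using Mv(1)
      by (simp add: algebra_simps add_mono mult_left_mono sum_nonneg)
    finally show "\<bar>perturbation v w s e t\<bar> \<le> M * (\<bar>s\<bar> + norm e)" .
  qed
qed

context
  fixes T :: real and u1 u2 v1 v2 :: "real \<Rightarrow> real" and w1 w2 :: "4 \<Rightarrow> real \<Rightarrow> real"
  assumes T: "0 \<le> T" and cu1: "continuous_on {0..T} u1" and cu2: "continuous_on {0..T} u2"
    and cv1: "continuous_on {0..T} v1" and cv2: "continuous_on {0..T} v2"
    and cw1: "\<And>k. continuous_on {0..T} (w1 k)" and cw2: "\<And>k. continuous_on {0..T} (w2 k)"
begin

lemma variation_perturbation:
  assumes "\<And>k. variation a u1 u2 (w1 k) (w2 k) T = axis k 1"
  shows "variation a u1 u2 (perturbation v1 w1 s e) (perturbation v2 w2 s e) T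
    = s *\<^sub>R variation a u1 u2 v1 v2 T + e"
proof -
  have "variation a u1 u2 (perturbation v1 w1 s e) (perturbation v2 w2 s e) T
    = variation a u1 u2 (\<lambda>t. s * v1 t + 1 * (\<Sum>k\<in>UNIV. e$k * w1 k t))
        (\<lambda>t. s * v2 t + 1 * (\<Sum>k\<in>UNIV. e$k * w2 k t)) T"
    by (simp add: perturbation_def)
  also have "\<dots> = s *\<^sub>R variation a u1 u2 v1 v2 T
      + 1 *\<^sub>R variation a u1 u2 (\<lambda>t. \<Sum>k\<in>UNIV. e$k * w1 k t) (\<lambda>t. \<Sum>k\<in>UNIV. e$k * w2 k t) T"
    by (rule variation_lincomb[OF cu1 cu2 cv1 cv2 _ _ T]) (intro continuous_intros cw1 cw2)+
  also have "\<dots> = s *\<^sub>R variation a u1 u2 v1 v2 T + (\<Sum>k\<in>UNIV. e$k *\<^sub>R axis k 1)"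
    by (simp add: variation_sum[OF T cu1 cu2 cw1 cw2] assms)
  also have "(\<Sum>k\<in>UNIV. e$k *\<^sub>R axis k (1::real)) = e"
    using basis_expansion[of e] by (simp add: scalar_mult_eq_scaleR)
  finally show ?thesis .
qed

lemma cost_variation_perturbation:
  "cost_variation c1 c2 u1 u2 T (perturbation v1 w1 s e) (perturbation v2 w2 s e)
    = s * cost_variation c1 c2 u1 u2 T v1 v2 + (\<chi> k. cost_variation c1 c2 u1 u2 T (w1 k) (w2 k)) \<bullet> e"
proof -
  have "cost_variation c1 c2 u1 u2 T (perturbation v1 w1 s e) (perturbation v2 w2 s e)
    = cost_variation c1 c2 u1 u2 T (\<lambda>t. s * v1 t + 1 * (\<Sum>k\<in>UNIV. e$k * w1 k t))
        (\<lambda>t. s * v2 t + 1 * (\<Sum>k\<in>UNIV. e$k * w2 k t))"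
    by (simp add: perturbation_def)
  also have "\<dots> = s * cost_variation c1 c2 u1 u2 T v1 v2
      + 1 * cost_variation c1 c2 u1 u2 T (\<lambda>t. \<Sum>k\<in>UNIV. e$k * w1 k t) (\<lambda>t. \<Sum>k\<in>UNIV. e$k * w2 k t)"
    by (rule cost_variation_lincomb[OF T cu1 cu2 cv1 cv2]) (intro continuous_intros cw1 cw2)+
  also have "\<dots> = s * cost_variation c1 c2 u1 u2 T v1 v2
      + (\<chi> k. cost_variation c1 c2 u1 u2 T (w1 k) (w2 k)) \<bullet> e"
    by (simp add: cost_variation_sum[OF T cu1 cu2 cw1 cw2] inner_vec_def mult.commute)
  finally show ?thesis .
qed


lemma abs_perturbations_le:
  obtains M where "M \<ge> 1" and "\<And>s e t. t \<in> {0..T} \<Longrightarrow>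
    \<bar>perturbation v1 w1 s e t\<bar> \<le> M * (\<bar>s\<bar> + norm e) \<and> \<bar>perturbation v2 w2 s e t\<bar> \<le> M * (\<bar>s\<bar> + norm e)"
proof -
  obtain M1 where M1: "M1 \<ge> 1"
    "\<And>s e t. t \<in> {0..T} \<Longrightarrow> \<bar>perturbation v1 w1 s e t\<bar> \<le> M1 * (\<bar>s\<bar> + norm e)"
    using abs_perturbation_le[where w = w1, OF cv1 cw1] by blast
  obtain M2 where M2: "M2 \<ge> 1"
    "\<And>s e t. t \<in> {0..T} \<Longrightarrow> \<bar>perturbation v2 w2 s e t\<bar> \<le> M2 * (\<bar>s\<bar> + norm e)"
    using abs_perturbation_le[where w = w2, OF cv2 cw2] by blast
  show ?thesis
  proof (rule that[of "M1 + M2"])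
    show "M1 + M2 \<ge> 1"
      using M1(1) M2(1) by simp
    fix s and e :: "real^4" and t assume t: "t \<in> {0..T}"
    have "M1 * (\<bar>s\<bar> + norm e) \<le> (M1 + M2) * (\<bar>s\<bar> + norm e)"
      and "M2 * (\<bar>s\<bar> + norm e) \<le> (M1 + M2) * (\<bar>s\<bar> + norm e)"
      using M1(1) M2(1) by (intro mult_right_mono; simp)+
    then show "\<bar>perturbation v1 w1 s e t\<bar> \<le> (M1 + M2) * (\<bar>s\<bar> + norm e)
      \<and> \<bar>perturbation v2 w2 s e t\<bar> \<le> (M1 + M2) * (\<bar>s\<bar> + norm e)"
      using M1(2)[OF t, of s e] M2(2)[OF t, of s e] by linarith
  qed
qed

lemma continuous_on_endpoint_perturbation:
  "continuous_on UNIV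
    (\<lambda>e. endpoint a (\<lambda>t. u1 t + perturbation v1 w1 s e t) (\<lambda>t. u2 t + perturbation v2 w2 s e t) T)"
proof (intro continuous_at_imp_continuous_on ballI)
  fix e0 :: "real^4"
  obtain M where M: "M \<ge> 1" and pert: "\<And>s e t. t \<in> {0..T} \<Longrightarrow>
    \<bar>perturbation v1 w1 s e t\<bar> \<le> M * (\<bar>s\<bar> + norm e) \<and> \<bar>perturbation v2 w2 s e t\<bar> \<le> M * (\<bar>s\<bar> + norm e)"
    using abs_perturbations_le by blast
  define U1 where "U1 t = u1 t + perturbation v1 w1 s e0 t" for t
  define U2 where "U2 t = u2 t + perturbation v2 w2 s e0 t" for t
  have cU: "continuous_on {0..T} U1" "continuous_on {0..T} U2"
    unfolding U1_def U2_def by (intro continuous_intros cu1 cu2 cv1 cv2 cw1 cw2)+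
  obtain K where "K \<ge> 0"
    and lip: "\<And>b1 b2 \<beta>. continuous_on {0..T} b1 \<Longrightarrow> continuous_on {0..T} b2 \<Longrightarrow>
      (\<And>t. t \<in> {0..T} \<Longrightarrow> \<bar>b1 t\<bar> \<le> \<beta> \<and> \<bar>b2 t\<bar> \<le> \<beta>) \<Longrightarrow> \<beta> \<le> 1 \<Longrightarrow>
      norm (endpoint a (\<lambda>t. U1 t + b1 t) (\<lambda>t. U2 t + b2 t) T - endpoint a U1 U2 T) \<le> K * \<beta>"
    by (rule endpoint_lipschitz[OF T cU, of a]) blast
  show "isCont (\<lambda>e. endpoint a (\<lambda>t. u1 t + perturbation v1 w1 s e t)
      (\<lambda>t. u2 t + perturbation v2 w2 s e t) T) e0"
  proof (rule isCont_if_lipschitz_at[of "1 / M" _ _ "K * M"])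
    fix e assume "norm (e - e0) \<le> 1 / M"
    then have "M * norm (e - e0) \<le> 1"
      using M by (simp add: field_simps)
    moreover have "continuous_on {0..T} (perturbation v1 w1 0 (e - e0))"
      and "continuous_on {0..T} (perturbation v2 w2 0 (e - e0))"
      by (intro continuous_intros cv1 cv2 cw1 cw2)+
    moreover have "(\<lambda>t. u1 t + perturbation v1 w1 s e t) = (\<lambda>t. U1 t + perturbation v1 w1 0 (e - e0) t)"
      and "(\<lambda>t. u2 t + perturbation v2 w2 s e t) = (\<lambda>t. U2 t + perturbation v2 w2 0 (e - e0) t)"
      unfolding U1_def U2_def by (subst perturbation_shift[of _ _ _ e _ e0]; simp add: add.assoc)+
    moreover have "(\<lambda>t. u1 t + perturbation v1 w1 s e0 t) = U1" "(\<lambda>t. u2 t + perturbation v2 w2 s e0 t) = U2"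
      unfolding U1_def U2_def by simp_all
    ultimately show "norm (endpoint a (\<lambda>t. u1 t + perturbation v1 w1 s e t)
        (\<lambda>t. u2 t + perturbation v2 w2 s e t) T - endpoint a (\<lambda>t. u1 t + perturbation v1 w1 s e0 t)
        (\<lambda>t. u2 t + perturbation v2 w2 s e0 t) T) \<le> K * M * norm (e - e0)"
      using lip pert[of _ 0 "e - e0"] by (simp add: mult.assoc)
  qed (use M in simp)
qed

lemma endpoint_perturbation_expansion:
  assumes w: "\<And>k. variation a u1 u2 (w1 k) (w2 k) T = axis k 1" and v: "variation a u1 u2 v1 v2 T = 0"
  obtains K \<delta> where "K \<ge> 0" and "\<delta> > 0"
    and "\<And>s e. \<bar>s\<bar> \<le> \<delta> \<Longrightarrow> norm e \<le> \<delta> \<Longrightarrow>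
      norm (endpoint a (\<lambda>t. u1 t + perturbation v1 w1 s e t) (\<lambda>t. u2 t + perturbation v2 w2 s e t) T
        - endpoint a u1 u2 T - e) \<le> K * (\<bar>s\<bar> + norm e)\<^sup>2"
proof -
  obtain M where M: "M \<ge> 1" and pert: "\<And>s e t. t \<in> {0..T} \<Longrightarrow>
    \<bar>perturbation v1 w1 s e t\<bar> \<le> M * (\<bar>s\<bar> + norm e) \<and> \<bar>perturbation v2 w2 s e t\<bar> \<le> M * (\<bar>s\<bar> + norm e)"
    by (rule abs_perturbations_le) blast
  obtain K where "K \<ge> 0"
    and rem_le: "\<And>b1 b2 \<beta>. continuous_on {0..T} b1 \<Longrightarrow> continuous_on {0..T} b2 \<Longrightarrow>
      (\<And>t. t \<in> {0..T} \<Longrightarrow> \<bar>b1 t\<bar> \<le> \<beta> \<and> \<bar>b2 t\<bar> \<le> \<beta>) \<Longrightarrow> \<beta> \<le> 1 \<Longrightarrow>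
      norm (endpoint a (\<lambda>t. u1 t + b1 t) (\<lambda>t. u2 t + b2 t) T - endpoint a u1 u2 T
        - variation a u1 u2 b1 b2 T) \<le> K * \<beta>\<^sup>2"
    by (rule endpoint_expansion[OF T cu1 cu2, of a]) blast
  show ?thesis
  proof (rule that[of "K * M\<^sup>2" "1 / (2 * M)"])
    show "K * M\<^sup>2 \<ge> 0" and "1 / (2 * M) > 0"
      using \<open>K \<ge> 0\<close> M by auto
    fix s and e :: "real^4" assume "\<bar>s\<bar> \<le> 1 / (2 * M)" and "norm e \<le> 1 / (2 * M)"
    then have "M * (\<bar>s\<bar> + norm e) \<le> M * (2 * (1 / (2 * M)))"
      using M by (intro mult_left_mono) auto
    then have "M * (\<bar>s\<bar> + norm e) \<le> 1"
      using M by simp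
    moreover have "continuous_on {0..T} (perturbation v1 w1 s e)"
      and "continuous_on {0..T} (perturbation v2 w2 s e)"
      by (intro continuous_intros cv1 cv2 cw1 cw2)+
    ultimately have "norm (endpoint a (\<lambda>t. u1 t + perturbation v1 w1 s e t)
        (\<lambda>t. u2 t + perturbation v2 w2 s e t) T - endpoint a u1 u2 T
        - variation a u1 u2 (perturbation v1 w1 s e) (perturbation v2 w2 s e) T)
      \<le> K * (M * (\<bar>s\<bar> + norm e))\<^sup>2"
      using rem_le pert[where s = s and e = e] by blast
    then show "norm (endpoint a (\<lambda>t. u1 t + perturbation v1 w1 s e t)
        (\<lambda>t. u2 t + perturbation v2 w2 s e t) T - endpoint a u1 u2 T - e) \<le> K * M\<^sup>2 * (\<bar>s\<bar> + norm e)\<^sup>2"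
      using variation_perturbation[OF w] v by (simp add: power_mult_distrib mult.assoc)
  qed
qed

lemma cost_perturbation_expansion:
  assumes "c1 \<ge> 0" and "c2 \<ge> 0"
  obtains K where "K \<ge> 0"
    and "\<And>s e. \<bar>cost c1 c2 T (\<lambda>t. u1 t + perturbation v1 w1 s e t) (\<lambda>t. u2 t + perturbation v2 w2 s e t)
      - cost c1 c2 T u1 u2 - s * cost_variation c1 c2 u1 u2 T v1 v2
      - (\<chi> k. cost_variation c1 c2 u1 u2 T (w1 k) (w2 k)) \<bullet> e\<bar> \<le> K * (\<bar>s\<bar> + norm e)\<^sup>2"
proof -
  obtain M where pert: "\<And>s e t. t \<in> {0..T} \<Longrightarrow>
    \<bar>perturbation v1 w1 s e t\<bar> \<le> M * (\<bar>s\<bar> + norm e) \<and> \<bar>perturbation v2 w2 s e t\<bar> \<le> M * (\<bar>s\<bar> + norm e)"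
    by (rule abs_perturbations_le) blast
  show ?thesis
  proof (rule that[of "T * (c1 + c2) * M\<^sup>2"])
    show "T * (c1 + c2) * M\<^sup>2 \<ge> 0"
      using T assms by simp
    fix s and e :: "real^4"
    have "continuous_on {0..T} (perturbation v1 w1 s e)" and "continuous_on {0..T} (perturbation v2 w2 s e)"
      by (intro continuous_intros cv1 cv2 cw1 cw2)+
    from cost_expansion[OF T assms cu1 cu2 this pert[where s = s and e = e]]
    have "\<bar>cost c1 c2 T (\<lambda>t. u1 t + perturbation v1 w1 s e t) (\<lambda>t. u2 t + perturbation v2 w2 s e t)
      - cost c1 c2 T u1 u2 - cost_variation c1 c2 u1 u2 T (perturbation v1 w1 s e) (perturbation v2 w2 s e)\<bar>
      \<le> T * (c1 + c2) * M\<^sup>2 * (\<bar>s\<bar> + norm e)\<^sup>2"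
      by (simp add: power_mult_distrib mult.assoc)
    then show "\<bar>cost c1 c2 T (\<lambda>t. u1 t + perturbation v1 w1 s e t) (\<lambda>t. u2 t + perturbation v2 w2 s e t)
      - cost c1 c2 T u1 u2 - s * cost_variation c1 c2 u1 u2 T v1 v2
      - (\<chi> k. cost_variation c1 c2 u1 u2 T (w1 k) (w2 k)) \<bullet> e\<bar> \<le> T * (c1 + c2) * M\<^sup>2 * (\<bar>s\<bar> + norm e)\<^sup>2"
      by (simp add: cost_variation_perturbation diff_diff_eq add.assoc)
  qed
qed
end

lemma cost_variation_eq_0_if_variation_eq_0:
  assumes T: "0 < T" and "c1 \<ge> 0" and "c2 \<ge> 0"
    and cu1: "continuous_on {0..T} u1" and cu2: "continuous_on {0..T} u2"
    and pv1: "real_polynomial_function v1" and pv2: "real_polynomial_function v2"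
    and pw1: "\<And>k. real_polynomial_function (w1 k)" and pw2: "\<And>k. real_polynomial_function (w2 k)"
    and w: "\<And>k. variation a u1 u2 (w1 k) (w2 k) T = axis k 1"
    and v: "variation a u1 u2 v1 v2 T = 0"
    and opt: "\<And>b1 b2. real_polynomial_function b1 \<Longrightarrow> real_polynomial_function b2 \<Longrightarrow>
      endpoint a (\<lambda>t. u1 t + b1 t) (\<lambda>t. u2 t + b2 t) T = endpoint a u1 u2 T \<Longrightarrow>
      cost c1 c2 T u1 u2 \<le> cost c1 c2 T (\<lambda>t. u1 t + b1 t) (\<lambda>t. u2 t + b2 t)"
  shows "cost_variation c1 c2 u1 u2 T v1 v2 = 0"
proof -
  have T0: "0 \<le> T"
    using T by simp
  have cv: "continuous_on {0..T} v1" "continuous_on {0..T} v2"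
    and cw: "\<And>k. continuous_on {0..T} (w1 k)" "\<And>k. continuous_on {0..T} (w2 k)"
    using pv1 pv2 pw1 pw2 by (auto intro: continuous_on_real_polynomial_function)
  obtain K1 \<delta> where "K1 \<ge> 0" "\<delta> > 0"
    and Phi: "\<And>s e. \<bar>s\<bar> \<le> \<delta> \<Longrightarrow> norm e \<le> \<delta> \<Longrightarrow>
      norm (endpoint a (\<lambda>t. u1 t + perturbation v1 w1 s e t) (\<lambda>t. u2 t + perturbation v2 w2 s e t) T
        - endpoint a u1 u2 T - e) \<le> K1 * (\<bar>s\<bar> + norm e)\<^sup>2"
    by (rule endpoint_perturbation_expansion[where ?w1.0 = w1 and ?w2.0 = w2, OF T0 cu1 cu2 cv cw w v])
      blast
  obtain K2 where "K2 \<ge> 0"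
    and Cst: "\<And>s e. \<bar>cost c1 c2 T (\<lambda>t. u1 t + perturbation v1 w1 s e t) (\<lambda>t. u2 t + perturbation v2 w2 s e t)
      - cost c1 c2 T u1 u2 - s * cost_variation c1 c2 u1 u2 T v1 v2
      - (\<chi> k. cost_variation c1 c2 u1 u2 T (w1 k) (w2 k)) \<bullet> e\<bar> \<le> K2 * (\<bar>s\<bar> + norm e)\<^sup>2"
    by (rule cost_perturbation_expansion[where ?w1.0 = w1 and ?w2.0 = w2, OF T0 cu1 cu2 cv cw assms(2,3)])
      blast
  have K: "K1 * x \<le> (K1 + K2) * x" "K2 * x \<le> (K1 + K2) * x" if "x \<ge> 0" for x
    using that \<open>K1 \<ge> 0\<close> \<open>K2 \<ge> 0\<close> by (simp_all add: distrib_right)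
  show ?thesis
  proof (rule constrained_min_first_order[where K = "K1 + K2" and \<delta> = \<delta>
      and d = "\<chi> k. cost_variation c1 c2 u1 u2 T (w1 k) (w2 k)"])
    show "continuous_on UNIV (\<lambda>e. endpoint a (\<lambda>t. u1 t + perturbation v1 w1 s e t)
      (\<lambda>t. u2 t + perturbation v2 w2 s e t) T)" for s
      by (rule continuous_on_endpoint_perturbation[where ?w1.0 = w1 and ?w2.0 = w2, OF T0 cu1 cu2 cv cw])
  next
    fix s and e :: "real^4" assume "\<bar>s\<bar> \<le> \<delta>" and "norm e \<le> \<delta>"
    then show "norm (endpoint a (\<lambda>t. u1 t + perturbation v1 w1 s e t) (\<lambda>t. u2 t + perturbation v2 w2 s e t) T
      - endpoint a (\<lambda>t. u1 t + perturbation v1 w1 0 0 t) (\<lambda>t. u2 t + perturbation v2 w2 0 0 t) T - e)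
      \<le> (K1 + K2) * (\<bar>s\<bar> + norm e)\<^sup>2"
      using order_trans[OF Phi K(1)[OF zero_le_power2]] by simp
    show "\<bar>cost c1 c2 T (\<lambda>t. u1 t + perturbation v1 w1 s e t) (\<lambda>t. u2 t + perturbation v2 w2 s e t)
      - cost c1 c2 T (\<lambda>t. u1 t + perturbation v1 w1 0 0 t) (\<lambda>t. u2 t + perturbation v2 w2 0 0 t)
      - s * cost_variation c1 c2 u1 u2 T v1 v2
      - (\<chi> k. cost_variation c1 c2 u1 u2 T (w1 k) (w2 k)) \<bullet> e\<bar> \<le> (K1 + K2) * (\<bar>s\<bar> + norm e)\<^sup>2"
      using order_trans[OF Cst K(2)[OF zero_le_power2]] by simp
  next
    fix s and e :: "real^4"
    assume "endpoint a (\<lambda>t. u1 t + perturbation v1 w1 s e t) (\<lambda>t. u2 t + perturbation v2 w2 s e t) T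
      = endpoint a (\<lambda>t. u1 t + perturbation v1 w1 0 0 t) (\<lambda>t. u2 t + perturbation v2 w2 0 0 t) T"
    then show "cost c1 c2 T (\<lambda>t. u1 t + perturbation v1 w1 0 0 t) (\<lambda>t. u2 t + perturbation v2 w2 0 0 t)
      \<le> cost c1 c2 T (\<lambda>t. u1 t + perturbation v1 w1 s e t) (\<lambda>t. u2 t + perturbation v2 w2 s e t)"
      using opt[OF real_polynomial_function_perturbation[OF pv1 pw1]
          real_polynomial_function_perturbation[OF pv2 pw2]] by simp
  qed (use \<open>K1 \<ge> 0\<close> \<open>K2 \<ge> 0\<close> \<open>\<delta> > 0\<close> in auto)
qed

section \<open>Costates\<close>

text \<open>With the Hamiltonian \<open>H = p1 v1 + p2 v2 + p3 v1 x2 + p4 v1 x3\<close> and terminal costate \<open>lam\<close>,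
  \<open>costate3\<close> and \<open>costate2\<close> are \<open>p3\<close> and \<open>p2\<close>, \<open>p1 = lam$0\<close> and \<open>p4 = lam$3\<close> are constant,
  and \<open>H_u1\<close> is \<open>\<partial>H/\<partial>v1\<close> (while \<open>\<partial>H/\<partial>v2 = p2\<close>).\<close>

definition costate3 :: "real^4 \<Rightarrow> (real \<Rightarrow> real) \<Rightarrow> real \<Rightarrow> real \<Rightarrow> real" where
  "costate3 lam u1 T t = lam$2 + lam$3 * (prim u1 T - prim u1 t)"

definition costate2 :: "real^4 \<Rightarrow> (real \<Rightarrow> real) \<Rightarrow> real \<Rightarrow> real \<Rightarrow> real" where
  "costate2 lam u1 T t = lam$1
    + (prim (\<lambda>s. costate3 lam u1 T s * u1 s) T - prim (\<lambda>s. costate3 lam u1 T s * u1 s) t)"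

definition H_u1 :: "real^4 \<Rightarrow> real^4 \<Rightarrow> (real \<Rightarrow> real) \<Rightarrow> (real \<Rightarrow> real) \<Rightarrow> real \<Rightarrow> real \<Rightarrow> real" where
  "H_u1 lam a u1 u2 T t = lam$0 + costate3 lam u1 T t * lin_sol (a$1) u2 t + lam$3 * sol3 a u1 u2 t"

lemma costate_at_end [simp]: "costate3 lam u1 T T = lam$2" "costate2 lam u1 T T = lam$1"
  by (simp_all add: costate3_def costate2_def)

lemma continuous_on_costate3 [continuous_intros]:
  "continuous_on {0..T} u1 \<Longrightarrow> continuous_on {0..T} (costate3 lam u1 T)"
  unfolding costate3_def by (intro continuous_intros)

lemma continuous_on_costate2 [continuous_intros]:
  "continuous_on {0..T} u1 \<Longrightarrow> continuous_on {0..T} (costate2 lam u1 T)"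
  unfolding costate2_def by (intro continuous_intros)

lemma continuous_on_H_u1 [continuous_intros]:
  "continuous_on {0..T} u1 \<Longrightarrow> continuous_on {0..T} u2 \<Longrightarrow> continuous_on {0..T} (H_u1 lam a u1 u2 T)"
  unfolding H_u1_def by (intro continuous_intros)

lemma has_real_derivative_costate3:
  "continuous_on {0..T} u1 \<Longrightarrow> t \<in> {0..T} \<Longrightarrow>
    (costate3 lam u1 T has_real_derivative - (lam$3 * u1 t)) (at t within {0..T})"
  unfolding costate3_def by (auto intro!: derivative_eq_intros)

lemma has_real_derivative_costate2:
  "continuous_on {0..T} u1 \<Longrightarrow> t \<in> {0..T} \<Longrightarrow>
    (costate2 lam u1 T has_real_derivative - (costate3 lam u1 T t * u1 t)) (at t within {0..T})"
  unfolding costate2_def by (auto intro!: derivative_eq_intros continuous_intros)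

lemma inner_variation_eq_prim:
  assumes T: "0 \<le> T" and cu1: "continuous_on {0..T} u1" and cu2: "continuous_on {0..T} u2"
    and cb1: "continuous_on {0..T} b1" and cb2: "continuous_on {0..T} b2"
  shows "lam \<bullet> variation a u1 u2 b1 b2 T
    = prim (\<lambda>t. H_u1 lam a u1 u2 T t * b1 t + costate2 lam u1 T t * b2 t) T"
proof -
  let ?F = "\<lambda>t. lam$0 * prim b1 t + costate2 lam u1 T t * prim b2 t
    + costate3 lam u1 T t * var3 a u1 u2 b1 b2 t + lam$3 * var4 a u1 u2 b1 b2 t"
  have "?F T = ?F 0 + prim (\<lambda>t. H_u1 lam a u1 u2 T t * b1 t + costate2 lam u1 T t * b2 t) T"
  proof (rule eq_prim_if_has_derivative)
    show "continuous_on {0..T} (\<lambda>t. H_u1 lam a u1 u2 T t * b1 t + costate2 lam u1 T t * b2 t)"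
      by (intro continuous_intros cu1 cu2 cb1 cb2)
    fix s assume s: "s \<in> {0..T}"
    show "(?F has_real_derivative H_u1 lam a u1 u2 T s * b1 s + costate2 lam u1 T s * b2 s)
      (at s within {0..T})"
      by (rule DERIV_cong[OF DERIV_add[OF DERIV_add[OF DERIV_add[OF
          DERIV_cmult[OF has_real_derivative_prim[OF cb1 s]]
          DERIV_mult[OF has_real_derivative_costate2[OF cu1 s] has_real_derivative_prim[OF cb2 s]]]
          DERIV_mult[OF has_real_derivative_costate3[OF cu1 s] has_real_derivative_var(1)[OF cu1 cu2 cb1 cb2 s]]]
          DERIV_cmult[OF has_real_derivative_var(2)[OF cu1 cu2 cb1 cb2 s]]]])
        (simp add: H_u1_def algebra_simps)
  qed (use T in simp)
  then show ?thesis
    by (simp add: variation_def inner_vec4 var3_def var4_def algebra_simps)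
qed

lemma zero_if_orthogonal_to_polynomials:
  assumes "0 < T" and h: "continuous_on {0..T} h"
    and orth: "\<And>p. real_polynomial_function p \<Longrightarrow> prim (\<lambda>t. h t * p t) T = 0"
    and "t \<in> {0..T}"
  shows "h t = 0"
proof (rule zero_if_prim_square_nonpos[OF \<open>0 < T\<close> h _ \<open>t \<in> {0..T}\<close>])
  obtain M where "M \<ge> 1" and M: "\<And>t. t \<in> {0..T} \<Longrightarrow> \<bar>h t\<bar> \<le> M"
    using continuous_on_Icc_abs_bounded[OF h] by blast
  show "prim (\<lambda>t. h t * h t) T \<le> 0"
  proof (rule field_le_epsilon)
    fix \<epsilon> :: real assume "\<epsilon> > 0"
    then obtain q where q: "real_polynomial_function q"
      and hq: "\<And>x. x \<in> {0..T} \<Longrightarrow> \<bar>h x - q x\<bar> < \<epsilon> / (T * M)"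
      using Stone_Weierstrass_real_polynomial_function[OF compact_Icc h, of "\<epsilon> / (T * M)"]
        \<open>0 < T\<close> \<open>M \<ge> 1\<close> by auto
    have cq: "continuous_on {0..T} q"
      using q by (rule continuous_on_real_polynomial_function)
    have "prim (\<lambda>t. h t * h t) T = prim (\<lambda>t. h t * (h t - q t) + h t * q t) T"
      by (simp add: algebra_simps)
    also have "\<dots> = prim (\<lambda>t. h t * (h t - q t)) T + prim (\<lambda>t. h t * q t) T"
      by (rule prim_add) (use \<open>0 < T\<close> in \<open>auto intro!: continuous_intros h cq\<close>)
    also have "\<dots> = prim (\<lambda>t. h t * (h t - q t)) T"
      using orth[OF q] by simp
    also have "\<dots> \<le> T * (M * (\<epsilon> / (T * M)))"
    proof (rule order_trans[OF abs_ge_self abs_prim_le])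
      show "continuous_on {0..T} (\<lambda>t. h t * (h t - q t))"
        by (intro continuous_intros h cq)
      show "\<bar>h x * (h x - q x)\<bar> \<le> M * (\<epsilon> / (T * M))" if "x \<in> {0..T}" for x
        using abs_mult_le[OF M[OF that] less_imp_le[OF hq[OF that]]] .
    qed (use \<open>0 < T\<close> in simp)
    also have "\<dots> = 0 + \<epsilon>"
      using \<open>0 < T\<close> \<open>M \<ge> 1\<close> by simp
    finally show "prim (\<lambda>t. h t * h t) T \<le> 0 + \<epsilon>" .
  qed
qed

lemma zero_if_orthogonal_to_polynomial_pairs:
  assumes "0 < T" and h1: "continuous_on {0..T} h1" and h2: "continuous_on {0..T} h2"
    and orth: "\<And>b1 b2. real_polynomial_function b1 \<Longrightarrow> real_polynomial_function b2 \<Longrightarrow>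
      prim (\<lambda>t. h1 t * b1 t + h2 t * b2 t) T = 0"
    and "t \<in> {0..T}"
  shows "h1 t = 0" and "h2 t = 0"
proof -
  have zero: "real_polynomial_function (\<lambda>t. 0)"
    by (rule real_polynomial_function.intros(2))
  show "h1 t = 0"
    using zero_if_orthogonal_to_polynomials[OF \<open>0 < T\<close> h1 _ \<open>t \<in> {0..T}\<close>] orth[OF _ zero] by simp
  show "h2 t = 0"
    using zero_if_orthogonal_to_polynomials[OF \<open>0 < T\<close> h2 _ \<open>t \<in> {0..T}\<close>] orth[OF zero] by simp
qed

lemma costate2_closed_form:
  assumes cu1: "continuous_on {0..T} u1" and s: "s \<in> {0..T}"
  shows "costate2 lam u1 T s
    = lam$1 + lam$2 * (prim u1 T - prim u1 s) + lam$3 * (prim u1 T - prim u1 s)\<^sup>2 / 2"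
proof -
  let ?D = "\<lambda>s. costate2 lam u1 T s
    - (lam$1 + lam$2 * (prim u1 T - prim u1 s) + lam$3 * (prim u1 T - prim u1 s)\<^sup>2 / 2)"
  have "\<exists>c. \<forall>x\<in>{0..T}. ?D x = c"
  proof (rule has_field_derivative_zero_constant)
    fix x assume x: "x \<in> {0..T}"
    have Y: "((\<lambda>s. prim u1 T - prim u1 s) has_real_derivative - u1 x) (at x within {0..T})"
      using DERIV_diff[OF DERIV_const has_real_derivative_prim[OF cu1 x]] by simp
    show "(?D has_real_derivative 0) (at x within {0..T})"
      by (rule DERIV_cong[OF DERIV_diff[OF has_real_derivative_costate2[OF cu1 x]
          DERIV_add[OF DERIV_add[OF DERIV_const DERIV_cmult[OF Y]]
            DERIV_cdivide[OF DERIV_cmult[OF DERIV_power[OF Y]]]]]])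
        (simp add: costate3_def field_simps)
  qed simp
  then obtain c where c: "\<And>x. x \<in> {0..T} \<Longrightarrow> ?D x = c"
    by blast
  have "c = 0"
    using c[of T] s by simp
  then show ?thesis
    using c[OF s] by simp
qed

lemma eq_0_if_values_roots_of_quadratic:
  fixes Y :: "real \<Rightarrow> real"
  assumes Y: "continuous_on {a..b} Y" and "Y b = 0" and "c0 \<noteq> 0 \<or> c1 \<noteq> 0"
    and roots: "\<And>s. s \<in> {a..b} \<Longrightarrow> Y s * (c0 + c1 * Y s) = 0" and s: "s \<in> {a..b}"
  shows "Y s = 0"
proof (rule ccontr)
  assume "Y s \<noteq> 0"
  then have root: "c0 + c1 * Y s = 0"
    using roots[OF s] by simp
  have "\<exists>x. s \<le> x \<and> x \<le> b \<and> Y x = Y s / 2"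
  proof (cases "Y s > 0")
    case True
    then show ?thesis
      using IVT2'[of Y b "Y s / 2" s] continuous_on_subset[OF Y] s \<open>Y b = 0\<close> by auto
  next
    case False
    then show ?thesis
      using IVT'[of Y s "Y s / 2" b] continuous_on_subset[OF Y] s \<open>Y b = 0\<close> \<open>Y s \<noteq> 0\<close> by auto
  qed
  then obtain x where "s \<le> x" "x \<le> b" and "Y x = Y s / 2"
    by blast
  then have "x \<in> {a..b}"
    using s by auto
  then have "c0 + c1 * (Y s / 2) = 0"
    using roots[of x] \<open>Y x = Y s / 2\<close> \<open>Y s \<noteq> 0\<close> by simp
  then have "c1 * Y s = 0"
    using root by linarith
  with root \<open>Y s \<noteq> 0\<close> assms(3) show False
    by simp
qed

lemma has_real_derivative_unique_Icc:
  assumes "a < b" and "t \<in> {a..b}"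
    and "(f has_real_derivative D1) (at t within {a..b})" and "(f has_real_derivative D2) (at t within {a..b})"
  shows "D1 = D2"
proof -
  have "at t within {a..b} \<noteq> bot"
    using assms(1,2) by (simp add: trivial_limit_within)
  then show ?thesis
    using vector_derivative_unique_within assms(3,4)
    by (metis has_real_derivative_iff_has_vector_derivative)
qed

lemma u1_eq_0_if_abnormal:
  assumes T: "0 < T" and cu1: "continuous_on {0..T} u1" and cu2: "continuous_on {0..T} u2"
    and "lam \<noteq> 0"
    and H: "\<And>t. t \<in> {0..T} \<Longrightarrow> H_u1 lam a u1 u2 T t = 0"
    and p2: "\<And>t. t \<in> {0..T} \<Longrightarrow> costate2 lam u1 T t = 0"
    and t: "t \<in> {0..T}"
  shows "u1 t = 0"
proof -
  define Y where "Y s = prim u1 T - prim u1 s" for s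
  have TT: "T \<in> {0..T}"
    using T by simp
  have "lam$1 = 0"
    using p2[OF TT] by simp
  have coeffs: "lam$2 \<noteq> 0 \<or> lam$3 / 2 \<noteq> 0"
  proof (rule ccontr)
    assume "\<not> ?thesis"
    moreover have "lam$0 = 0"
      using H[OF TT] calculation by (simp add: H_u1_def)
    ultimately have "lam = 0"
      using \<open>lam$1 = 0\<close> unfolding vec_eq_iff all_4_iff by simp
    with \<open>lam \<noteq> 0\<close> show False ..
  qed
  have roots: "Y s * (lam$2 + lam$3 / 2 * Y s) = 0" if "s \<in> {0..T}" for s
    using costate2_closed_form[OF cu1 that, of lam] p2[OF that] \<open>lam$1 = 0\<close>
    by (simp add: Y_def power2_eq_square algebra_simps)
  have "continuous_on {0..T} Y"
    unfolding Y_def by (intro continuous_intros cu1)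
  moreover have "Y T = 0"
    by (simp add: Y_def)
  ultimately have Y0: "Y s = 0" if "s \<in> {0..T}" for s
    using eq_0_if_values_roots_of_quadratic[of 0 T Y "lam$2" "lam$3 / 2"] coeffs roots that
    by blast
  have "(Y has_real_derivative - u1 t) (at t within {0..T})"
    unfolding Y_def using DERIV_diff[OF DERIV_const has_real_derivative_prim[OF cu1 t]] by simp
  moreover have "(Y has_real_derivative 0) (at t within {0..T})"
    by (rule has_field_derivative_transform_within[OF DERIV_const zero_less_one t]) (use Y0 in simp)
  ultimately have "- u1 t = 0"
    by (rule has_real_derivative_unique_Icc[OF T t])
  then show ?thesis
    by simp
qed

section \<open>Optimal controls are extremals\<close>

definition optimal :: "real \<Rightarrow> real \<Rightarrow> real \<Rightarrow> real^4 \<Rightarrow> (real \<Rightarrow> real) \<Rightarrow> (real \<Rightarrow> real) \<Rightarrow> bool"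
  where "optimal c1 c2 T a u1 u2 \<longleftrightarrow> (\<forall>v1 v2. smooth_control T v1 \<longrightarrow> smooth_control T v2 \<longrightarrow>
    endpoint a v1 v2 T = endpoint a u1 u2 T \<longrightarrow> cost c1 c2 T u1 u2 \<le> cost c1 c2 T v1 v2)"

lemma prim_const: "0 \<le> t \<Longrightarrow> prim (\<lambda>s. c) t = c * t"
  by (simp add: prim_def)

lemma u2_const_if_optimal_and_u1_eq_0:
  assumes T: "0 < T" and "c2 > 0" and cu2: "continuous_on {0..T} u2"
    and u1: "\<And>t. t \<in> {0..T} \<Longrightarrow> u1 t = 0" and opt: "optimal c1 c2 T a u1 u2"
    and t: "t \<in> {0..T}"
  shows "u2 t = prim u2 T / T"
proof -
  define m where "m = prim u2 T / T"
  have TT: "T \<in> {0..T}"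
    using T by simp
  have u1_integrals: "prim (\<lambda>s. u1 s * f s) T = 0" "prim u1 T = 0" for f
    using prim_cong[of T "\<lambda>s. u1 s * f s" "\<lambda>_. 0"] prim_cong[of T u1 "\<lambda>_. 0"] u1
    by (simp_all add: prim_def)
  have "endpoint a (\<lambda>_. 0) (\<lambda>_. m) T = endpoint a u1 u2 T"
    using T u1_integrals by (simp add: endpoint_def lin_sol_def sol3_def sol4_def prim_const m_def)
  then have "cost c1 c2 T u1 u2 \<le> cost c1 c2 T (\<lambda>_. 0) (\<lambda>_. m)"
    using opt smooth_control_const unfolding optimal_def by blast
  also have "\<dots> = 1/2 * (c2 * (T * m\<^sup>2))"
    using T by (simp add: cost_def)
  finally have "c2 * prim (\<lambda>t. u2 t * u2 t) T \<le> c2 * (T * m\<^sup>2)"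
  proof -
    have "prim (\<lambda>t. c1 * (u1 t)\<^sup>2 + c2 * (u2 t)\<^sup>2) T = prim (\<lambda>t. c2 * (u2 t * u2 t)) T"
      by (rule prim_cong) (use u1 in \<open>simp add: power2_eq_square\<close>)
    then show "cost c1 c2 T u1 u2 \<le> 1/2 * (c2 * (T * m\<^sup>2)) \<Longrightarrow> ?thesis"
      by (simp add: cost_def prim_def)
  qed
  then have sq: "prim (\<lambda>t. u2 t * u2 t) T \<le> T * m\<^sup>2"
    using \<open>c2 > 0\<close> by simp
  have "prim (\<lambda>t. (u2 t - m) * (u2 t - m)) T = prim (\<lambda>t. (1 * (u2 t * u2 t) + (- 2 * m) * u2 t) + m\<^sup>2) T"
    by (simp add: algebra_simps power2_eq_square)
  also have "\<dots> = prim (\<lambda>t. 1 * (u2 t * u2 t) + (- 2 * m) * u2 t) T + prim (\<lambda>t. m\<^sup>2) T"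
    by (rule prim_add[OF _ _ TT]; intro continuous_intros cu2)
  also have "\<dots> = (1 * prim (\<lambda>t. u2 t * u2 t) T + (- 2 * m) * prim u2 T) + m\<^sup>2 * T"
    using T by (subst prim_lincomb[OF _ cu2 TT]) (auto intro!: continuous_intros cu2 simp: prim_const)
  also have "\<dots> = prim (\<lambda>t. u2 t * u2 t) T - T * m\<^sup>2"
    using T by (simp add: m_def power2_eq_square field_simps)
  finally have "prim (\<lambda>t. (u2 t - m) * (u2 t - m)) T \<le> 0"
    using sq by simp
  moreover have "continuous_on {0..T} (\<lambda>t. u2 t - m)"
    by (intro continuous_intros cu2)
  ultimately have "u2 t - m = 0"
    using zero_if_prim_square_nonpos[OF T _ _ t] by blast
  then show ?thesis
    by (simp add: m_def)
qed

definition extremal :: "real \<Rightarrow> real \<Rightarrow> real \<Rightarrow> (real \<Rightarrow> real) \<Rightarrow> (real \<Rightarrow> real) \<Rightarrow> bool" where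
  "extremal c1 c2 T u1 u2 \<longleftrightarrow> (\<exists>z1 z2 z3 z4 :: real \<Rightarrow> real. \<forall>t\<in>{0..T}.
     u1 t = z1 t / c1 \<and> u2 t = z2 t / c2 \<and>
     (z1 has_real_derivative (1 / c2 * z2 t * z3 t)) (at t within {0..T}) \<and>
     (z2 has_real_derivative (- 1 / c1 * z1 t * z3 t)) (at t within {0..T}) \<and>
     (z3 has_real_derivative (- 1 / c1 * z1 t * z4 t)) (at t within {0..T}) \<and>
     (z4 has_real_derivative 0) (at t within {0..T}))"

lemma extremal_if_abnormal:
  assumes T: "0 < T" and "c2 > 0" and cu1: "continuous_on {0..T} u1" and cu2: "continuous_on {0..T} u2"
    and "lam \<noteq> 0"
    and orth: "\<And>b1 b2. real_polynomial_function b1 \<Longrightarrow> real_polynomial_function b2 \<Longrightarrow>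
      lam \<bullet> variation a u1 u2 b1 b2 T = 0"
    and opt: "optimal c1 c2 T a u1 u2"
  shows "extremal c1 c2 T u1 u2"
proof -
  have "prim (\<lambda>t. H_u1 lam a u1 u2 T t * b1 t + costate2 lam u1 T t * b2 t) T = 0"
    if "real_polynomial_function b1" and "real_polynomial_function b2" for b1 b2
    using orth[OF that] inner_variation_eq_prim[OF _ cu1 cu2, of b1 b2 lam a] T
      continuous_on_real_polynomial_function[OF that(1)] continuous_on_real_polynomial_function[OF that(2)]
    by simp
  moreover have "continuous_on {0..T} (H_u1 lam a u1 u2 T)" "continuous_on {0..T} (costate2 lam u1 T)"
    by (intro continuous_intros cu1 cu2)+
  ultimately have "H_u1 lam a u1 u2 T t = 0" and "costate2 lam u1 T t = 0" if "t \<in> {0..T}" for t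
    using zero_if_orthogonal_to_polynomial_pairs[OF T _ _ _ that] by blast+
  then have u1: "u1 t = 0" if "t \<in> {0..T}" for t
    using u1_eq_0_if_abnormal[OF T cu1 cu2 \<open>lam \<noteq> 0\<close>] that by blast
  have u2: "u2 t = prim u2 T / T" if "t \<in> {0..T}" for t
    by (rule u2_const_if_optimal_and_u1_eq_0[OF T \<open>c2 > 0\<close> cu2 u1 opt that])
  show ?thesis
    unfolding extremal_def
    by (rule exI[of _ "\<lambda>_. 0"], rule exI[of _ "\<lambda>_. c2 * (prim u2 T / T)"],
        rule exI[of _ "\<lambda>_. 0"], rule exI[of _ "\<lambda>_. 0"]) (use u1 u2 \<open>c2 > 0\<close> in auto)
qed

definition poly_variations :: "real^4 \<Rightarrow> (real \<Rightarrow> real) \<Rightarrow> (real \<Rightarrow> real) \<Rightarrow> real \<Rightarrow> (real^4) set"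
  where "poly_variations a u1 u2 T = {variation a u1 u2 b1 b2 T | b1 b2.
    real_polynomial_function b1 \<and> real_polynomial_function b2}"

lemma subspace_poly_variations:
  assumes T: "0 \<le> T" and cu1: "continuous_on {0..T} u1" and cu2: "continuous_on {0..T} u2"
  shows "subspace (poly_variations a u1 u2 T)"
proof -
  have lincomb: "c *\<^sub>R x + d *\<^sub>R y \<in> poly_variations a u1 u2 T"
    if x: "x \<in> poly_variations a u1 u2 T" and y: "y \<in> poly_variations a u1 u2 T" for x y c d
  proof -
    obtain f1 f2 g1 g2 where f: "x = variation a u1 u2 f1 f2 T"
        "real_polynomial_function f1" "real_polynomial_function f2"
      and g: "y = variation a u1 u2 g1 g2 T" "real_polynomial_function g1" "real_polynomial_function g2"
      using x y unfolding poly_variations_def by blast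
    show ?thesis
      unfolding poly_variations_def mem_Collect_eq
    proof (intro exI conjI)
      show "real_polynomial_function (\<lambda>s. c * f1 s + d * g1 s)"
        and "real_polynomial_function (\<lambda>s. c * f2 s + d * g2 s)"
        using f g by (simp_all add: real_polynomial_function_lincomb)
      show "c *\<^sub>R x + d *\<^sub>R y = variation a u1 u2 (\<lambda>s. c * f1 s + d * g1 s) (\<lambda>s. c * f2 s + d * g2 s) T"
        using f g by (simp add: variation_lincomb[OF cu1 cu2 _ _ _ _ T] continuous_on_real_polynomial_function)
    qed
  qed
  have "variation a u1 u2 (\<lambda>_. 0) (\<lambda>_. 0) T = 0"
    by (simp add: variation_def var3_def var4_def prim_def vec_eq_iff all_4_iff)
  then have "0 \<in> poly_variations a u1 u2 T"
    unfolding poly_variations_def using real_polynomial_function.intros(2)[of 0] by force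
  moreover have "x + y \<in> poly_variations a u1 u2 T" and "c *\<^sub>R x \<in> poly_variations a u1 u2 T"
    if "x \<in> poly_variations a u1 u2 T" and "y \<in> poly_variations a u1 u2 T" for x y c
    using lincomb[OF that, of 1 1] lincomb[OF that, of c 0] by simp_all
  ultimately show ?thesis
    unfolding subspace_def by blast
qed

lemma poly_variations_right_inverse:
  assumes "poly_variations a u1 u2 T = UNIV"
  obtains w1 w2 :: "4 \<Rightarrow> real \<Rightarrow> real"
  where "\<And>k. real_polynomial_function (w1 k)" and "\<And>k. real_polynomial_function (w2 k)"
    and "\<And>k. variation a u1 u2 (w1 k) (w2 k) T = axis k 1"
proof -
  have "\<exists>b. real_polynomial_function (fst b) \<and> real_polynomial_function (snd b)
      \<and> variation a u1 u2 (fst b) (snd b) T = axis k 1" for k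
  proof -
    have "axis k 1 \<in> poly_variations a u1 u2 T"
      using assms by simp
    then obtain b1 b2 where "real_polynomial_function b1" "real_polynomial_function b2"
      "variation a u1 u2 b1 b2 T = axis k 1"
      unfolding poly_variations_def by auto
    then show ?thesis
      by (intro exI[of _ "(b1, b2)"]) simp
  qed
  then have "\<exists>w. \<forall>k. real_polynomial_function (fst (w k)) \<and> real_polynomial_function (snd (w k))
      \<and> variation a u1 u2 (fst (w k)) (snd (w k)) T = axis k 1"
    by (intro choice allI)
  then obtain w where "\<And>k. real_polynomial_function (fst (w k))" "\<And>k. real_polynomial_function (snd (w k))"
    and "\<And>k. variation a u1 u2 (fst (w k)) (snd (w k)) T = axis k 1"
    by blast
  then show ?thesis
    using that[of "\<lambda>k. fst (w k)" "\<lambda>k. snd (w k)"] by blast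
qed

lemma multiplier_if_normal:
  assumes T: "0 < T" and "c1 \<ge> 0" and "c2 \<ge> 0"
    and cu1: "continuous_on {0..T} u1" and cu2: "continuous_on {0..T} u2"
    and normal: "poly_variations a u1 u2 T = UNIV"
    and opt: "\<And>b1 b2. real_polynomial_function b1 \<Longrightarrow> real_polynomial_function b2 \<Longrightarrow>
      endpoint a (\<lambda>t. u1 t + b1 t) (\<lambda>t. u2 t + b2 t) T = endpoint a u1 u2 T \<Longrightarrow>
      cost c1 c2 T u1 u2 \<le> cost c1 c2 T (\<lambda>t. u1 t + b1 t) (\<lambda>t. u2 t + b2 t)"
  obtains lam where "\<And>b1 b2. real_polynomial_function b1 \<Longrightarrow> real_polynomial_function b2 \<Longrightarrow>
    cost_variation c1 c2 u1 u2 T b1 b2 = lam \<bullet> variation a u1 u2 b1 b2 T"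
proof -
  have T0: "0 \<le> T"
    using T by simp
  obtain w1 w2 :: "4 \<Rightarrow> real \<Rightarrow> real" where pw1: "\<And>k. real_polynomial_function (w1 k)"
    and pw2: "\<And>k. real_polynomial_function (w2 k)"
    and w12: "\<And>k. variation a u1 u2 (w1 k) (w2 k) T = axis k 1"
    using poly_variations_right_inverse[OF normal] by blast
  have cw: "\<And>k. continuous_on {0..T} (w1 k)" "\<And>k. continuous_on {0..T} (w2 k)"
    using pw1 pw2 by (simp_all add: continuous_on_real_polynomial_function)
  show ?thesis
  proof (rule that[of "\<chi> k. cost_variation c1 c2 u1 u2 T (w1 k) (w2 k)"])
    fix v1 v2 :: "real \<Rightarrow> real"
    assume pv1: "real_polynomial_function v1" and pv2: "real_polynomial_function v2"
    have cv: "continuous_on {0..T} v1" "continuous_on {0..T} v2"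
      using pv1 pv2 by (simp_all add: continuous_on_real_polynomial_function)
    define y where "y = variation a u1 u2 v1 v2 T"
    let ?b1 = "perturbation v1 w1 1 (- y)" and ?b2 = "perturbation v2 w2 1 (- y)"
    have "variation a u1 u2 ?b1 ?b2 T = 0"
      using variation_perturbation[where ?w1.0 = w1 and ?w2.0 = w2, OF T0 cu1 cu2 cv cw w12]
      by (simp add: y_def)
    then have "cost_variation c1 c2 u1 u2 T ?b1 ?b2 = 0"
      by (rule cost_variation_eq_0_if_variation_eq_0[where ?w1.0 = w1 and ?w2.0 = w2,
          OF T assms(2,3) cu1 cu2 real_polynomial_function_perturbation[OF pv1 pw1]
          real_polynomial_function_perturbation[OF pv2 pw2] pw1 pw2 w12 _ opt])
    then show "cost_variation c1 c2 u1 u2 T v1 v2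
      = (\<chi> k. cost_variation c1 c2 u1 u2 T (w1 k) (w2 k)) \<bullet> variation a u1 u2 v1 v2 T"
      using cost_variation_perturbation[where ?w1.0 = w1 and ?w2.0 = w2, OF T0 cu1 cu2 cv cw]
      by (simp add: y_def inner_minus_right)
  qed
qed

lemma controls_eq_costates_if_multiplier:
  assumes T: "0 < T" and cu1: "continuous_on {0..T} u1" and cu2: "continuous_on {0..T} u2"
    and lam: "\<And>b1 b2. real_polynomial_function b1 \<Longrightarrow> real_polynomial_function b2 \<Longrightarrow>
      cost_variation c1 c2 u1 u2 T b1 b2 = lam \<bullet> variation a u1 u2 b1 b2 T"
    and t: "t \<in> {0..T}"
  shows "c1 * u1 t = H_u1 lam a u1 u2 T t" and "c2 * u2 t = costate2 lam u1 T t"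
proof -
  let ?h1 = "\<lambda>t. c1 * u1 t - H_u1 lam a u1 u2 T t" and ?h2 = "\<lambda>t. c2 * u2 t - costate2 lam u1 T t"
  have TT: "T \<in> {0..T}"
    using T by simp
  have "prim (\<lambda>t. ?h1 t * b1 t + ?h2 t * b2 t) T = 0"
    if pb1: "real_polynomial_function b1" and pb2: "real_polynomial_function b2" for b1 b2
  proof -
    have cb: "continuous_on {0..T} b1" "continuous_on {0..T} b2"
      using pb1 pb2 by (simp_all add: continuous_on_real_polynomial_function)
    have "prim (\<lambda>t. ?h1 t * b1 t + ?h2 t * b2 t) T
      = prim (\<lambda>t. 1 * (c1 * u1 t * b1 t + c2 * u2 t * b2 t)
          + (- 1) * (H_u1 lam a u1 u2 T t * b1 t + costate2 lam u1 T t * b2 t)) T"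
      by (simp add: algebra_simps)
    also have "\<dots> = cost_variation c1 c2 u1 u2 T b1 b2 - lam \<bullet> variation a u1 u2 b1 b2 T"
      unfolding cost_variation_def inner_variation_eq_prim[OF less_imp_le[OF T] cu1 cu2 cb] using T
      by (subst prim_lincomb[OF _ _ TT]) (auto intro!: continuous_intros cu1 cu2 cb)
    finally show ?thesis
      using lam[OF pb1 pb2] by simp
  qed
  moreover have "continuous_on {0..T} ?h1" and "continuous_on {0..T} ?h2"
    by (intro continuous_intros cu1 cu2)+
  ultimately have "?h1 t = 0" and "?h2 t = 0"
    using zero_if_orthogonal_to_polynomial_pairs[OF T _ _ _ t] by blast+
  then show "c1 * u1 t = H_u1 lam a u1 u2 T t" and "c2 * u2 t = costate2 lam u1 T t"
    by simp_all
qed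

lemma extremal_if_multiplier:
  assumes T: "0 < T" and "c1 > 0" and "c2 > 0"
    and cu1: "continuous_on {0..T} u1" and cu2: "continuous_on {0..T} u2"
    and lam: "\<And>b1 b2. real_polynomial_function b1 \<Longrightarrow> real_polynomial_function b2 \<Longrightarrow>
      cost_variation c1 c2 u1 u2 T b1 b2 = lam \<bullet> variation a u1 u2 b1 b2 T"
  shows "extremal c1 c2 T u1 u2"
  unfolding extremal_def
proof (intro exI ballI conjI)
  let ?z1 = "H_u1 lam a u1 u2 T" and ?z2 = "costate2 lam u1 T" and ?z3 = "costate3 lam u1 T"
  fix t assume t: "t \<in> {0..T}"
  note z = controls_eq_costates_if_multiplier[OF T cu1 cu2 lam t]
  show "u1 t = ?z1 t / c1" and "u2 t = ?z2 t / c2"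
    using z \<open>c1 > 0\<close> \<open>c2 > 0\<close> by (simp_all add: field_simps)
  show "(?z1 has_real_derivative 1 / c2 * ?z2 t * ?z3 t) (at t within {0..T})"
    unfolding H_u1_def
    by (rule DERIV_cong[OF DERIV_add[OF DERIV_add[OF DERIV_const
        DERIV_mult[OF has_real_derivative_costate3[OF cu1 t] has_real_derivative_sol(2)[OF cu1 cu2 t]]]
        DERIV_cmult[OF has_real_derivative_sol(3)[OF cu1 cu2 t]]]])
      (use z(2) \<open>c2 > 0\<close> in \<open>simp add: field_simps\<close>)
  show "(?z2 has_real_derivative - 1 / c1 * ?z1 t * ?z3 t) (at t within {0..T})"
    by (rule DERIV_cong[OF has_real_derivative_costate2[OF cu1 t]])
      (use z(1) \<open>c1 > 0\<close> in \<open>simp add: field_simps\<close>)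
  show "(?z3 has_real_derivative - 1 / c1 * ?z1 t * lam$3) (at t within {0..T})"
    by (rule DERIV_cong[OF has_real_derivative_costate3[OF cu1 t]])
      (use z(1) \<open>c1 > 0\<close> in \<open>simp add: field_simps\<close>)
  show "((\<lambda>_. lam$3) has_real_derivative 0) (at t within {0..T})"
    by simp
qed

lemma extremal_if_optimal:
  assumes T: "0 < T" and "c1 > 0" and "c2 > 0"
    and su1: "smooth_control T u1" and su2: "smooth_control T u2" and opt: "optimal c1 c2 T a u1 u2"
  shows "extremal c1 c2 T u1 u2"
proof -
  have cu1: "continuous_on {0..T} u1" and cu2: "continuous_on {0..T} u2"
    using su1 su2 by (simp_all add: smooth_control_imp_continuous_on)
  show ?thesis
  proof (cases "poly_variations a u1 u2 T = UNIV")
    case True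
    have opt_poly: "cost c1 c2 T u1 u2 \<le> cost c1 c2 T (\<lambda>t. u1 t + b1 t) (\<lambda>t. u2 t + b2 t)"
      if "real_polynomial_function b1" "real_polynomial_function b2"
        "endpoint a (\<lambda>t. u1 t + b1 t) (\<lambda>t. u2 t + b2 t) T = endpoint a u1 u2 T" for b1 b2
      using opt[unfolded optimal_def, rule_format, OF smooth_control_add_polynomial[OF su1 that(1)]
          smooth_control_add_polynomial[OF su2 that(2)] that(3)] .
    show ?thesis
    proof (rule multiplier_if_normal[OF T _ _ cu1 cu2 True opt_poly])
      fix lam assume "\<And>b1 b2. real_polynomial_function b1 \<Longrightarrow> real_polynomial_function b2 \<Longrightarrow>
        cost_variation c1 c2 u1 u2 T b1 b2 = lam \<bullet> variation a u1 u2 b1 b2 T"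
      then show ?thesis
        by (rule extremal_if_multiplier[OF T \<open>c1 > 0\<close> \<open>c2 > 0\<close> cu1 cu2])
    qed (use \<open>c1 > 0\<close> \<open>c2 > 0\<close> in simp_all)
  next
    case False
    have span: "span (poly_variations a u1 u2 T) = poly_variations a u1 u2 T"
      using T cu1 cu2 by (simp add: subspace_poly_variations span_eq_iff)
    have "span (poly_variations a u1 u2 T) \<subset> span UNIV"
      unfolding span using False by (simp add: psubset_eq)
    then obtain lam :: "real^4" where "lam \<noteq> 0"
      and orth: "\<And>y. y \<in> span (poly_variations a u1 u2 T) \<Longrightarrow> orthogonal lam y"
      by (metis orthogonal_to_subspace_exists_gen)
    have "lam \<bullet> variation a u1 u2 b1 b2 T = 0"
      if "real_polynomial_function b1" "real_polynomial_function b2" for b1 b2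
    proof -
      have "variation a u1 u2 b1 b2 T \<in> poly_variations a u1 u2 T"
        using that unfolding poly_variations_def by blast
      then have "variation a u1 u2 b1 b2 T \<in> span (poly_variations a u1 u2 T)"
        by (rule span_base)
      then show ?thesis
        using orth unfolding orthogonal_def by blast
    qed
    then show ?thesis
      by (rule extremal_if_abnormal[OF T \<open>c2 > 0\<close> cu1 cu2 \<open>lam \<noteq> 0\<close> _ opt])
  qed
qed

lemma sol_eq_if_endpoint_eq:
  "endpoint a v1 v2 T = endpoint a u1 u2 T \<Longrightarrow> sol a v1 v2 T = sol a u1 u2 T"
  by (simp add: endpoint_def sol_def vec_eq_iff all_4_iff)

lemma steers_if_endpoint_eq:
  assumes "smooth_control T v1" and "smooth_control T v2"
    and "X0 = G4_mat (a$0) (a$1) (a$2) (a$3)" and "Xf = sol a u1 u2 T"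
    and "endpoint a v1 v2 T = endpoint a u1 u2 T"
  shows "steers T X0 Xf v1 v2"
  unfolding steers_def
proof (intro conjI exI[of _ "sol a v1 v2"])
  show "trajectory T v1 v2 (sol a v1 v2)"
    using assms(1,2) by (simp add: trajectory_sol smooth_control_imp_continuous_on)
  show "sol a v1 v2 T = Xf"
    using sol_eq_if_endpoint_eq[OF assms(5)] assms(4) by simp
qed (use assms in \<open>simp_all add: sol_def\<close>)

theorem proposition5p1:
  fixes c1 c2 tf :: real and X0 Xf :: "real^4^4" and u1 u2 :: "real \<Rightarrow> real"
  assumes "c1 > 0" and "c2 > 0" and "tf > 0"
    and "X0 \<in> G4" and "Xf \<in> G4"
    and "steers tf X0 Xf u1 u2"
    and "\<forall>v1 v2. steers tf X0 Xf v1 v2 \<longrightarrow> cost c1 c2 tf u1 u2 \<le> cost c1 c2 tf v1 v2"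
  shows "\<exists>z1 z2 z3 z4 :: real \<Rightarrow> real. \<forall>t\<in>{0..tf}.
           u1 t = z1 t / c1 \<and> u2 t = z2 t / c2 \<and>
           (z1 has_real_derivative (1 / c2 * z2 t * z3 t)) (at t within {0..tf}) \<and>
           (z2 has_real_derivative (- 1 / c1 * z1 t * z3 t)) (at t within {0..tf}) \<and>
           (z3 has_real_derivative (- 1 / c1 * z1 t * z4 t)) (at t within {0..tf}) \<and>
           (z4 has_real_derivative 0) (at t within {0..tf})"
proof -
  obtain X where su: "smooth_control tf u1" "smooth_control tf u2"
    and X: "trajectory tf u1 u2 X" "X 0 = X0" "X tf = Xf"
    using assms(6) unfolding steers_def by blast
  obtain x1 x2 x3 x4 where "X0 = G4_mat x1 x2 x3 x4"
    using assms(4) by (auto simp: G4_eq)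
  then have "X0 = G4_mat (vec4 x1 x2 x3 x4 $ 0) (vec4 x1 x2 x3 x4 $ 1)
      (vec4 x1 x2 x3 x4 $ 2) (vec4 x1 x2 x3 x4 $ 3)"
    by simp
  then obtain a :: "real^4" where X0: "X0 = G4_mat (a$0) (a$1) (a$2) (a$3)"
    by blast
  have "Xf = sol a u1 u2 tf"
    using trajectory_eq_sol[OF smooth_control_imp_continuous_on[OF su(1)]
        smooth_control_imp_continuous_on[OF su(2)] X(1)] X(2,3) X0 assms(3) by simp
  then have "optimal c1 c2 tf a u1 u2"
    unfolding optimal_def using assms(7) steers_if_endpoint_eq[OF _ _ X0] by blast
  from extremal_if_optimal[OF assms(3,1,2) su this] show ?thesis
    unfolding extremal_def .
qed

end
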